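(* Let $\mathcal{X}$ be finite, $T>0$, $\alpha>0$, $r:\mathcal{X}\to\mathbb{R}$, $Q^{\mathrm{pre}}(t)$ a pretrained CTMC generator, and $p_{\lim}$ an arbitrary (possibly non-degenerate) probability distribution on $\mathcal{X}$. Consider jointly optimizing, over all CTMC generators $Q$ and all initial distributions $P_0$ on $\mathcal{X}$ (fully nonparametric class), the objective $$J(Q,P_0)=\mathbb{E}_{x_0\sim P_0,\,x_{0:T}\sim P^{Q}}[r(x_T)]-\alpha\Big\{\mathbb{E}_{x_0\sim P_0,\,x_{0:T}\sim P^{Q}}\Big[\int_0^T\sum_{y\neq x_t}\Big\{Q^{\mathrm{pre}}_{x_t,y}(t)-Q_{x_t,y}(t)+Q_{x_t,y}(t)\log\frac{Q_{x_t,y}(t)}{Q^{\mathrm{pre}}_{x_t,y}(t)}\Big\}dt\Big]+\mathrm{KL}(P_0\,\|\,p_{\lim})\Big\}.$$ Let $(Q^{\star},P_0^{\star})$ be a maximizer. Then $P_0^{\star}(x)\propto\exp(V_0(x)/\alpha)\,p_{\lim}(x)$, where $V_t$ is the optimal value function, and the time-$T$ distribution of the CTMC with generator $Q^{\star}$ started from $P_0^{\star}$ is proportional to $\exp(r(x)/\alpha)\,p^{\mathrm{pre}}(x)$, where $p^{\mathrm{pre}}$ is the time-$T$ distribution of the CTMC with generator $Q^{\mathrm{pre}}$ started from $p_{\lim}$.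
   Context: A CTMC generator is a family $Q(t)=(Q_{x,y}(t))$ with $Q_{x,y}(t)\ge0$ for $x\neq y$ (rate from $x$ to $y$) and $Q_{x,x}(t)=-\sum_{y\neq x}Q_{x,y}(t)$; marginals obey $\frac{dp_t(x)}{dt}=\sum_{y\neq x}Q_{y,x}(t)p_t(y)-\sum_{y\neq x}Q_{x,y}(t)p_t(x)$. $P^{Q}$ denotes the law of the path of the CTMC with generator $Q$ given its initial state. The optimal value function is $$V_t(x)=\mathbb{E}_{x_{t:T}\sim P^{Q^{\star}}}\Big[r(x_T)-\alpha\int_t^T\sum_{y\neq x_s}\Big\{Q^{\star}_{x_s,y}(s)-Q^{\mathrm{pre}}_{x_s,y}(s)+Q^{\star}_{x_s,y}(s)\log\frac{Q^{\star}_{x_s,y}(s)}{Q^{\mathrm{pre}}_{x_s,y}(s)}\Big\}ds\;\Big|\;x_t=x\Big].$$ Generators are assumed regular enough (e.g. continuous in $t$) that Kolmogorov equations have unique solutions; $0\log(0/0)=0$. *)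

theory Defs
  imports "HOL-Analysis.Analysis"
begin

text \<open>A time-dependent rate matrix is
  Q :: real \<Rightarrow> 'x \<Rightarrow> 'x \<Rightarrow> real, where Q t x y is the rate from x to y at time t.\<close>

definition is_distr :: "('x::finite \<Rightarrow> real) \<Rightarrow> bool" where
  "is_distr p \<longleftrightarrow> (\<forall>x. 0 \<le> p x) \<and> (\<Sum>x\<in>UNIV. p x) = 1"

text \<open>CTMC generator on [0,T]: nonnegative off-diagonal rates, rows summing to zero,
  continuous in time (regularity making the Kolmogorov equations uniquely solvable).\<close>
definition is_generator :: "real \<Rightarrow> (real \<Rightarrow> 'x::finite \<Rightarrow> 'x \<Rightarrow> real) \<Rightarrow> bool" where
  "is_generator T Q \<longleftrightarrow>
     (\<forall>t\<in>{0..T}. \<forall>x y. x \<noteq> y \<longrightarrow> 0 \<le> Q t x y) \<and>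
     (\<forall>t\<in>{0..T}. \<forall>x. Q t x x = - (\<Sum>y\<in>UNIV - {x}. Q t x y)) \<and>
     (\<forall>x y. continuous_on {0..T} (\<lambda>t. Q t x y))"

text \<open>Marginal flow of the CTMC with generator Q on [a,b] started at time a from
  distribution p0: the (unique) solution of the Kolmogorov forward equation
  d/dt p_t(x) = sum_{y \<noteq> x} Q_{y,x}(t) p_t(y) - sum_{y \<noteq> x} Q_{x,y}(t) p_t(x),
  normalised to be 0 outside [a,b].\<close>
definition flow :: "real \<Rightarrow> real \<Rightarrow> (real \<Rightarrow> 'x::finite \<Rightarrow> 'x \<Rightarrow> real) \<Rightarrow> ('x \<Rightarrow> real)
                     \<Rightarrow> real \<Rightarrow> 'x \<Rightarrow> real" where
  "flow a b Q p0 = (THE p. p a = p0 \<and>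
      (\<forall>t\<in>{a..b}. \<forall>x. ((\<lambda>s. p s x) has_real_derivative
          ((\<Sum>y\<in>UNIV - {x}. Q t y x * p t y) - (\<Sum>y\<in>UNIV - {x}. Q t x y * p t x)))
          (at t within {a..b})) \<and>
      (\<forall>t. t \<notin> {a..b} \<longrightarrow> p t = (\<lambda>_. 0)))"

definition marginal :: "real \<Rightarrow> (real \<Rightarrow> 'x::finite \<Rightarrow> 'x \<Rightarrow> real) \<Rightarrow> ('x \<Rightarrow> real)
                        \<Rightarrow> real \<Rightarrow> 'x \<Rightarrow> real" where
  "marginal T Q P0 = flow 0 T Q P0"

text \<open>Transition probability P(x_s = z | x_t = x), for t \<le> s \<le> T.\<close>
definition trans :: "real \<Rightarrow> (real \<Rightarrow> 'x::finite \<Rightarrow> 'x \<Rightarrow> real) \<Rightarrow> real \<Rightarrow> 'x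
                     \<Rightarrow> real \<Rightarrow> 'x \<Rightarrow> real" where
  "trans T Q t x = flow t T Q (\<lambda>z. if z = x then 1 else 0)"

definition pen :: "(real \<Rightarrow> 'x::finite \<Rightarrow> 'x \<Rightarrow> real) \<Rightarrow> (real \<Rightarrow> 'x \<Rightarrow> 'x \<Rightarrow> real)
                   \<Rightarrow> real \<Rightarrow> 'x \<Rightarrow> real" where
  "pen Qpre Q t x = (\<Sum>y\<in>UNIV - {x}.
      Qpre t x y - Q t x y + (if Q t x y = 0 then 0 else Q t x y * ln (Q t x y / Qpre t x y)))"

definition KL :: "('x::finite \<Rightarrow> real) \<Rightarrow> ('x \<Rightarrow> real) \<Rightarrow> real" where
  "KL p q = (\<Sum>x\<in>UNIV. if p x = 0 then 0 else p x * ln (p x / q x))"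

text \<open>Pairs (Q, P0) for which the objective is finite (otherwise it equals -\<infinity>):
  Q a generator, P0 a distribution, absolute continuity w.r.t. p_lim and Qpre, and
  finite (integrable, nonnegative) expected path-KL penalty.\<close>
definition admissible :: "real \<Rightarrow> (real \<Rightarrow> 'x::finite \<Rightarrow> 'x \<Rightarrow> real) \<Rightarrow> ('x \<Rightarrow> real)
                          \<Rightarrow> (real \<Rightarrow> 'x \<Rightarrow> 'x \<Rightarrow> real) \<Rightarrow> ('x \<Rightarrow> real) \<Rightarrow> bool" where
  "admissible T Qpre plim Q P0 \<longleftrightarrow>
     is_generator T Q \<and> is_distr P0 \<and>
     (\<forall>x. plim x = 0 \<longrightarrow> P0 x = 0) \<and>
     (\<forall>t\<in>{0..T}. \<forall>x y. x \<noteq> y \<longrightarrow> Qpre t x y = 0 \<longrightarrow> Q t x y = 0) \<and>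
     (\<lambda>t. \<Sum>x\<in>UNIV. marginal T Q P0 t x * pen Qpre Q t x) integrable_on {0..T}"

text \<open>The objective J(Q,P0), with path expectations written through the marginals.\<close>
definition objective :: "real \<Rightarrow> real \<Rightarrow> ('x::finite \<Rightarrow> real) \<Rightarrow> (real \<Rightarrow> 'x \<Rightarrow> 'x \<Rightarrow> real)
                         \<Rightarrow> ('x \<Rightarrow> real) \<Rightarrow> (real \<Rightarrow> 'x \<Rightarrow> 'x \<Rightarrow> real) \<Rightarrow> ('x \<Rightarrow> real) \<Rightarrow> real" where
  "objective T \<alpha> r Qpre plim Q P0 =
     (\<Sum>x\<in>UNIV. marginal T Q P0 T x * r x)
     - \<alpha> * (integral {0..T} (\<lambda>t. \<Sum>x\<in>UNIV. marginal T Q P0 t x * pen Qpre Q t x)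
            + KL P0 plim)"

definition value_fn :: "real \<Rightarrow> real \<Rightarrow> ('x::finite \<Rightarrow> real) \<Rightarrow> (real \<Rightarrow> 'x \<Rightarrow> 'x \<Rightarrow> real)
                        \<Rightarrow> (real \<Rightarrow> 'x \<Rightarrow> 'x \<Rightarrow> real) \<Rightarrow> real \<Rightarrow> 'x \<Rightarrow> real" where
  "value_fn T \<alpha> r Qpre Qs t x =
     (\<Sum>z\<in>UNIV. trans T Qs t x T z * r z)
     - \<alpha> * integral {t..T} (\<lambda>s. \<Sum>z\<in>UNIV. trans T Qs t x s z * pen Qpre Qs s z)"

end

(*
  Let phi solve the backward Kolmogorov equation of Qpre with phi_T = exp (r / alpha); it is
  positive, and its Doob h-transform Qtilt(x,y) = Qpre(x,y) phi_t(y) / phi_t(x) is again a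
  generator. Differentiating sum_x p_t(x) ln phi_t(x) along the forward equation of an
  admissible pair (Q, P0) with marginals p_t gives

    J(Q, P0) = alpha (E_P0 [ln phi_0] - KL(P0 || plim)) - alpha int_0^T E_p_t [D(Q_t || Qtilt_t)] dt,

  where D >= 0 sums q ln (q / w) - q + w over the jumps. By Gibbs' variational principle the
  first term is at most alpha ln Z, Z = sum_x plim(x) phi_0(x), with equality exactly for
  P0 = plim phi_0 / Z, and (Qtilt, plim phi_0 / Z) attains alpha ln Z. A maximiser therefore
  starts from plim phi_0 / Z and jumps like Qtilt wherever its marginal lives, so its marginal
  is the h-transform p^pre_t phi_t / Z of the pretrained one, and V_0 = alpha ln phi_0 on the
  support of plim.
*)

theory Submission
  imports Defs
begin

section \<open>Linear systems with continuous coefficients\<close>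

definition solves_linear_ode ::
    "real \<Rightarrow> real \<Rightarrow> (real \<Rightarrow> 'x::finite \<Rightarrow> 'x \<Rightarrow> real) \<Rightarrow> (real \<Rightarrow> 'x \<Rightarrow> real) \<Rightarrow> bool" where
  "solves_linear_ode a b A p \<longleftrightarrow>
     (\<forall>t\<in>{a..b}. \<forall>x. ((\<lambda>s. p s x) has_real_derivative (\<Sum>y\<in>UNIV. A t x y * p t y))
                        (at t within {a..b}))"

lemma continuous_on_Icc_entries_bounded:
  fixes A :: "real \<Rightarrow> 'x::finite \<Rightarrow> 'x \<Rightarrow> real"
  assumes "\<And>x y. continuous_on {a..b} (\<lambda>t. A t x y)"
  obtains M where "0 \<le> M" "\<And>t x y. t \<in> {a..b} \<Longrightarrow> \<bar>A t x y\<bar> \<le> M"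
proof -
  let ?g = "\<lambda>t. \<Sum>x\<in>UNIV. \<Sum>y\<in>UNIV. \<bar>A t x y\<bar>"
  have "compact (?g ` {a..b})"
    by (intro compact_continuous_image continuous_intros assms compact_Icc)
  then obtain B where B: "\<forall>t\<in>{a..b}. \<bar>?g t\<bar> \<le> B"
    by (auto dest!: compact_imp_bounded simp: bounded_iff)
  have entry_le: "\<bar>A t x y\<bar> \<le> ?g t" for t x y
    by (rule order_trans[OF member_le_sum member_le_sum[where f = "\<lambda>x. \<Sum>y\<in>UNIV. \<bar>A t x y\<bar>"]])
       (auto intro: sum_nonneg)
  have "\<bar>A t x y\<bar> \<le> max B 0" if "t \<in> {a..b}" for t x y
    using order_trans[OF entry_le[of t x y] abs_le_D1[OF B[rule_format, OF that]]] by simp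
  then show thesis
    by (intro that[of "max B 0"]) auto
qed

lemma has_integral_power_shift:
  fixes a t :: real
  assumes "a \<le> t"
  shows "((\<lambda>s. (s - a) ^ n) has_integral (t - a) ^ Suc n / Suc n) {a..t}"
proof -
  have "((\<lambda>s. (s - a) ^ Suc n / Suc n) has_real_derivative (s - a) ^ n) (at s within {a..t})" for s
    by (auto intro!: derivative_eq_intros simp: field_simps simp del: of_nat_Suc power_Suc)
  then have "((\<lambda>s. (s - a) ^ n) has_integral (t - a) ^ Suc n / Suc n - (a - a) ^ Suc n / Suc n) {a..t}"
    by (intro fundamental_theorem_of_calculus assms) (simp add: has_real_derivative_iff_has_vector_derivative)
  then show ?thesis by simp
qed

lemma gronwall_vanishes:
  fixes e e' :: "real \<Rightarrow> real"
  assumes deriv: "\<And>s. s \<in> {a..b} \<Longrightarrow> (e has_real_derivative e' s) (at s within {a..b})"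
    and growth: "\<And>s. s \<in> {a..b} \<Longrightarrow> e' s \<le> c * e s"
    and nonneg: "\<And>s. s \<in> {a..b} \<Longrightarrow> 0 \<le> e s" and start: "e a = 0" and t: "t \<in> {a..b}"
  shows "e t = 0"
proof -
  define f where "f s = e s * exp (- c * (s - a))" for s
  define f' where "f' s = (e' s - c * e s) * exp (- c * (s - a))" for s
  have "(f has_real_derivative f' s) (at s within {a..t})" if "s \<in> {a..t}" for s
  proof -
    have "(f has_real_derivative f' s) (at s within {a..b})"
      unfolding f_def f'_def using that t
      by (auto intro!: derivative_eq_intros deriv simp: algebra_simps)
    then show ?thesis
      by (rule has_field_derivative_subset) (use t in auto)
  qed
  then have "(f' has_integral f t - f a) {a..t}"
    using t by (intro fundamental_theorem_of_calculus)
      (auto simp: has_real_derivative_iff_has_vector_derivative)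
  moreover have "f' s \<le> 0" if "s \<in> {a..t}" for s
    using growth[of s] that t by (auto simp: f'_def mult_nonpos_nonneg)
  ultimately have "f t - f a \<le> 0"
    by (metis has_integral_0 has_integral_le)
  then have "e t \<le> 0"
    using start by (simp add: f_def mult_le_0_iff)
  with nonneg[OF t] show ?thesis by simp
qed

lemma continuous_vanishes_below_zero_integral:
  fixes g h :: "real \<Rightarrow> real"
  assumes "a < b" and g: "(g has_integral 0) {a..b}" and h_cont: "continuous_on {a..b} h"
    and h_nonneg: "\<And>s. s \<in> {a..b} \<Longrightarrow> 0 \<le> h s" and h_le: "\<And>s. s \<in> {a..b} \<Longrightarrow> h s \<le> g s"
    and t: "t \<in> {a..b}"
  shows "h t = 0"
proof -
  have h_int: "(h has_integral integral {a..b} h) {a..b}"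
    using h_cont by (intro integrable_integral integrable_continuous_interval)
  then have "integral {a..b} h \<le> 0"
    using g h_le by (rule has_integral_le)
  moreover have "0 \<le> integral {a..b} h"
    using h_int h_nonneg by (rule has_integral_nonneg)
  ultimately have "(h has_integral 0) (cbox a b)"
    using h_int by simp
  then show ?thesis
    using has_integral_0_cbox_imp_0[of a b h t] h_cont h_nonneg t \<open>a < b\<close> by auto
qed

lemma quadratic_form_le:
  fixes B :: "'x::finite \<Rightarrow> 'x \<Rightarrow> real"
  assumes "\<And>x y. \<bar>B x y\<bar> \<le> M"
  shows "(\<Sum>x\<in>UNIV. \<Sum>y\<in>UNIV. d x * B x y * d y) \<le> M * CARD('x) * (\<Sum>x\<in>UNIV. (d x)\<^sup>2)"
proof -
  have M: "0 \<le> M" using assms by (meson abs_ge_zero order_trans)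
  have "d x * B x y * d y \<le> M * ((d x)\<^sup>2 + (d y)\<^sup>2) / 2" for x y
  proof -
    have "d x * B x y * d y \<le> \<bar>d x * B x y * d y\<bar>"
      by simp
    also have "\<dots> = \<bar>B x y\<bar> * (\<bar>d x\<bar> * \<bar>d y\<bar>)"
      by (simp add: abs_mult mult_ac)
    also have "\<dots> \<le> M * (\<bar>d x\<bar> * \<bar>d y\<bar>)"
      by (intro mult_right_mono assms) simp
    also have "\<dots> \<le> M * (((d x)\<^sup>2 + (d y)\<^sup>2) / 2)"
      using sum_squares_bound[of "\<bar>d x\<bar>" "\<bar>d y\<bar>"] M by (intro mult_left_mono) auto
    finally show ?thesis by simp
  qed
  then have "(\<Sum>x\<in>UNIV. \<Sum>y\<in>UNIV. d x * B x y * d y)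
      \<le> (\<Sum>x\<in>UNIV. \<Sum>y\<in>UNIV. M * ((d x)\<^sup>2 + (d y)\<^sup>2) / 2)"
    by (intro sum_mono)
  also have "\<dots> = (\<Sum>x\<in>UNIV. \<Sum>y::'x\<in>UNIV. M / 2 * (d x)\<^sup>2) + (\<Sum>x::'x\<in>UNIV. \<Sum>y\<in>UNIV. M / 2 * (d y)\<^sup>2)"
    by (simp add: sum.distrib algebra_simps add_divide_distrib)
  also have "\<dots> = CARD('x) * (M / 2) * (\<Sum>x\<in>UNIV. (d x)\<^sup>2) + CARD('x) * (M / 2) * (\<Sum>x\<in>UNIV. (d x)\<^sup>2)"
    by (simp add: sum_distrib_left mult_ac)
  finally show ?thesis by simp
qed

lemma linear_ode_unique:
  fixes A :: "real \<Rightarrow> 'x::finite \<Rightarrow> 'x \<Rightarrow> real"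
  assumes cont: "\<And>x y. continuous_on {a..b} (\<lambda>t. A t x y)"
    and p: "solves_linear_ode a b A p" and q: "solves_linear_ode a b A q"
    and start: "p a = q a" and t: "t \<in> {a..b}"
  shows "p t = q t"
proof -
  obtain M where M: "\<And>s x y. s \<in> {a..b} \<Longrightarrow> \<bar>A s x y\<bar> \<le> M"
    using continuous_on_Icc_entries_bounded[of a b A, OF cont] by metis
  define d where "d s x = p s x - q s x" for s x
  define e where "e s = (\<Sum>x\<in>UNIV. (d s x)\<^sup>2)" for s
  define e' where "e' s = 2 * (\<Sum>x\<in>UNIV. \<Sum>y\<in>UNIV. d s x * A s x y * d s y)" for s
  have d_deriv: "((\<lambda>s. d s x) has_real_derivative (\<Sum>y\<in>UNIV. A s x y * d s y)) (at s within {a..b})"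
    if "s \<in> {a..b}" for s x
  proof -
    have "((\<lambda>s. d s x) has_real_derivative (\<Sum>y\<in>UNIV. A s x y * p s y) - (\<Sum>y\<in>UNIV. A s x y * q s y))
        (at s within {a..b})"
      using p q that unfolding solves_linear_ode_def d_def by (intro DERIV_diff) auto
    then show ?thesis
      by (simp add: d_def right_diff_distrib sum_subtractf)
  qed
  have "(e has_real_derivative e' s) (at s within {a..b})" if "s \<in> {a..b}" for s
  proof -
    have "(e has_real_derivative
        (\<Sum>x\<in>UNIV. of_nat 2 * ((\<Sum>y\<in>UNIV. A s x y * d s y) * d s x ^ (2 - Suc 0)))) (at s within {a..b})"
      unfolding e_def by (intro DERIV_sum DERIV_power d_deriv that)
    then show ?thesis
      by (simp add: e'_def sum_distrib_left sum_distrib_right mult_ac)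
  qed
  moreover have "e' s \<le> 2 * M * CARD('x) * e s" if "s \<in> {a..b}" for s
    using quadratic_form_le[of "A s" M "d s"] M[OF that] by (simp add: e'_def e_def)
  ultimately have "e t = 0"
    by (rule gronwall_vanishes) (use t in \<open>auto simp: e_def d_def start sum_nonneg\<close>)
  then show ?thesis
    by (simp add: e_def d_def sum_nonneg_eq_0_iff fun_eq_iff)
qed

primrec picard_iterate ::
    "real \<Rightarrow> (real \<Rightarrow> 'x::finite \<Rightarrow> 'x \<Rightarrow> real) \<Rightarrow> ('x \<Rightarrow> real) \<Rightarrow> nat \<Rightarrow> real \<Rightarrow> 'x \<Rightarrow> real" where
  "picard_iterate a A p\<^sub>0 0 = (\<lambda>t x. p\<^sub>0 x)"
| "picard_iterate a A p\<^sub>0 (Suc n) =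
     (\<lambda>t x. p\<^sub>0 x + integral {a..t} (\<lambda>s. \<Sum>y\<in>UNIV. A s x y * picard_iterate a A p\<^sub>0 n s y))"

lemma linear_integrand_integrable:
  fixes A :: "real \<Rightarrow> 'x::finite \<Rightarrow> 'x \<Rightarrow> real"
  assumes "\<And>x y. continuous_on {a..b} (\<lambda>t. A t x y)" and "\<And>y. continuous_on {a..b} (\<lambda>t. f t y)"
    and "t \<le> b"
  shows "(\<lambda>s. \<Sum>y\<in>UNIV. A s x y * f s y) integrable_on {a..t}"
proof -
  have "continuous_on {a..b} (\<lambda>s. \<Sum>y\<in>UNIV. A s x y * f s y)"
    by (intro continuous_intros assms)
  then have "continuous_on {a..t} (\<lambda>s. \<Sum>y\<in>UNIV. A s x y * f s y)"
    by (rule continuous_on_subset) (use assms(3) in auto)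
  then show ?thesis
    by (rule integrable_continuous_interval)
qed

lemma continuous_on_picard_iterate:
  fixes A :: "real \<Rightarrow> 'x::finite \<Rightarrow> 'x \<Rightarrow> real"
  assumes cont: "\<And>x y. continuous_on {a..b} (\<lambda>t. A t x y)"
  shows "continuous_on {a..b} (\<lambda>t. picard_iterate a A p\<^sub>0 n t x)"
proof (induction n arbitrary: x)
  case 0
  then show ?case by simp
next
  case (Suc n)
  have "(\<lambda>s. \<Sum>y\<in>UNIV. A s x y * picard_iterate a A p\<^sub>0 n s y) integrable_on {a..b}"
    by (intro linear_integrand_integrable[OF cont] Suc.IH order_refl)
  then show ?case
    by (simp, intro continuous_intros indefinite_integral_continuous_1)
qed

lemma picard_step_integral_bound:
  fixes A :: "real \<Rightarrow> 'x::finite \<Rightarrow> 'x \<Rightarrow> real"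
  assumes cont: "\<And>x y. continuous_on {a..b} (\<lambda>t. A t x y)"
    and f_cont: "\<And>y. continuous_on {a..b} (\<lambda>t. f t y)"
    and M: "\<And>s x y. s \<in> {a..b} \<Longrightarrow> \<bar>A s x y\<bar> \<le> M"
    and f_le: "\<And>s y. s \<in> {a..t} \<Longrightarrow> \<bar>f s y\<bar> \<le> C * (M * CARD('x) * (s - a)) ^ n / fact n"
    and t: "t \<in> {a..b}"
  shows "\<bar>integral {a..t} (\<lambda>s. \<Sum>y\<in>UNIV. A s x y * f s y)\<bar>
           \<le> C * (M * CARD('x) * (t - a)) ^ Suc n / fact (Suc n)"
proof -
  define K where "K = M * CARD('x)"
  have "norm (integral {a..t} (\<lambda>s. \<Sum>y\<in>UNIV. A s x y * f s y))
      \<le> integral {a..t} (\<lambda>s. C * K ^ Suc n / fact n * (s - a) ^ n)"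
  proof (rule integral_norm_bound_integral)
    show "(\<lambda>s. \<Sum>y\<in>UNIV. A s x y * f s y) integrable_on {a..t}"
      using t by (intro linear_integrand_integrable[OF cont f_cont]) auto
    show "(\<lambda>s. C * K ^ Suc n / fact n * (s - a) ^ n) integrable_on {a..t}"
      by (intro integrable_continuous_interval continuous_intros)
    fix s assume s: "s \<in> {a..t}"
    then have "s \<in> {a..b}" using t by auto
    have "norm (\<Sum>y\<in>UNIV. A s x y * f s y) \<le> (\<Sum>y\<in>UNIV. \<bar>A s x y\<bar> * \<bar>f s y\<bar>)"
      using sum_abs[of "\<lambda>y. A s x y * f s y" UNIV] by (simp add: abs_mult)
    also have "\<dots> \<le> (\<Sum>y::'x\<in>UNIV. M * (C * (K * (s - a)) ^ n / fact n))"
      using M[OF \<open>s \<in> {a..b}\<close>] f_le[OF s] unfolding K_def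
      by (intro sum_mono mult_mono) (auto intro: order_trans[OF abs_ge_zero])
    also have "\<dots> = C * K ^ Suc n / fact n * (s - a) ^ n"
      by (simp add: K_def power_mult_distrib)
    finally show "norm (\<Sum>y\<in>UNIV. A s x y * f s y) \<le> C * K ^ Suc n / fact n * (s - a) ^ n" .
  qed
  also have "\<dots> = C * K ^ Suc n / fact n * ((t - a) ^ Suc n / Suc n)"
    using t by (intro integral_unique has_integral_mult_right has_integral_power_shift) auto
  also have "\<dots> = C * (K * (t - a)) ^ Suc n / fact (Suc n)"
    by (simp add: power_mult_distrib mult_ac del: of_nat_Suc)
  finally show ?thesis
    by (simp add: K_def)
qed

lemma picard_iterate_diff_bound:
  fixes A :: "real \<Rightarrow> 'x::finite \<Rightarrow> 'x \<Rightarrow> real"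
  assumes cont: "\<And>x y. continuous_on {a..b} (\<lambda>t. A t x y)"
    and M: "\<And>s x y. s \<in> {a..b} \<Longrightarrow> \<bar>A s x y\<bar> \<le> M" and t: "t \<in> {a..b}"
  shows "\<bar>picard_iterate a A p\<^sub>0 (Suc n) t x - picard_iterate a A p\<^sub>0 n t x\<bar>
           \<le> (\<Sum>y\<in>UNIV. \<bar>p\<^sub>0 y\<bar>) * (M * CARD('x) * (t - a)) ^ Suc n / fact (Suc n)"
  using t
proof (induction n arbitrary: t x)
  case 0
  have "\<bar>p\<^sub>0 y\<bar> \<le> (\<Sum>y\<in>UNIV. \<bar>p\<^sub>0 y\<bar>) * (M * CARD('x) * (s - a)) ^ 0 / fact 0" for s y
    using member_le_sum[of y UNIV "\<lambda>y. \<bar>p\<^sub>0 y\<bar>"] by simp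
  from picard_step_integral_bound[where f = "\<lambda>s y. p\<^sub>0 y", OF cont _ M this 0] show ?case
    by simp
next
  case (Suc n)
  let ?P = "picard_iterate a A p\<^sub>0"
  have P_cont: "continuous_on {a..b} (\<lambda>s. ?P k s y)" for k y
    by (rule continuous_on_picard_iterate[OF cont])
  have "?P (Suc (Suc n)) t x - ?P (Suc n) t x
      = integral {a..t} (\<lambda>s. \<Sum>y\<in>UNIV. A s x y * ?P (Suc n) s y)
          - integral {a..t} (\<lambda>s. \<Sum>y\<in>UNIV. A s x y * ?P n s y)"
    by simp
  also have "\<dots> = integral {a..t} (\<lambda>s. \<Sum>y\<in>UNIV. A s x y * (?P (Suc n) s y - ?P n s y))"
  proof -
    have int: "(\<lambda>s. \<Sum>y\<in>UNIV. A s x y * ?P k s y) integrable_on {a..t}" for k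
      using Suc.prems by (intro linear_integrand_integrable[OF cont P_cont]) auto
    show ?thesis
      unfolding integral_diff[OF int int, symmetric]
      by (simp add: right_diff_distrib sum_subtractf del: picard_iterate.simps)
  qed
  also have "\<bar>\<dots>\<bar> \<le> (\<Sum>y\<in>UNIV. \<bar>p\<^sub>0 y\<bar>) * (M * CARD('x) * (t - a)) ^ Suc (Suc n) / fact (Suc (Suc n))"
  proof (rule picard_step_integral_bound[OF cont _ M _ Suc.prems])
    show "continuous_on {a..b} (\<lambda>s. ?P (Suc n) s y - ?P n s y)" for y
      by (intro continuous_on_diff P_cont)
    show "\<bar>?P (Suc n) s y - ?P n s y\<bar>
        \<le> (\<Sum>y\<in>UNIV. \<bar>p\<^sub>0 y\<bar>) * (M * CARD('x) * (s - a)) ^ Suc n / fact (Suc n)"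
      if "s \<in> {a..t}" for s y
      using Suc.IH[of s y] Suc.prems that by simp
  qed
  finally show ?case .
qed

lemma telescoping_bounded_convergent:
  fixes f :: "nat \<Rightarrow> real"
  assumes "summable c" and step: "\<And>n. \<bar>f (Suc n) - f n\<bar> \<le> c n"
  shows "convergent f" and "\<bar>f n\<bar> \<le> \<bar>f 0\<bar> + suminf c"
proof -
  have partial_sum: "f n = f 0 + (\<Sum>k<n. f (Suc k) - f k)" for n
    by (simp add: sum_lessThan_telescope)
  have "summable (\<lambda>k. f (Suc k) - f k)"
    using step by (intro summable_comparison_test'[OF \<open>summable c\<close>]) simp
  then have "convergent (\<lambda>n. f 0 + (\<Sum>k<n. f (Suc k) - f k))"
    by (intro convergent_add convergent_const summable_iff_convergent[THEN iffD1])
  then show "convergent f"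
    by (simp only: partial_sum[symmetric])
  have "\<bar>\<Sum>k<n. f (Suc k) - f k\<bar> \<le> (\<Sum>k<n. c k)"
    using step by (intro order_trans[OF sum_abs] sum_mono)
  also have "\<dots> \<le> suminf c"
    using \<open>summable c\<close> step by (intro sum_le_suminf) (auto intro: order_trans[OF abs_ge_zero])
  finally show "\<bar>f n\<bar> \<le> \<bar>f 0\<bar> + suminf c"
    by (subst partial_sum) (rule order_trans[OF abs_triangle_ineq add_left_mono])
qed

lemma picard_iterate_converges:
  fixes A :: "real \<Rightarrow> 'x::finite \<Rightarrow> 'x \<Rightarrow> real"
  assumes "a \<le> b" and cont: "\<And>x y. continuous_on {a..b} (\<lambda>t. A t x y)"
  obtains L B where "\<And>t x. t \<in> {a..b} \<Longrightarrow> (\<lambda>n. picard_iterate a A p\<^sub>0 n t x) \<longlonglongrightarrow> L t x"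
    and "\<And>n t x. t \<in> {a..b} \<Longrightarrow> \<bar>picard_iterate a A p\<^sub>0 n t x\<bar> \<le> B"
proof -
  let ?P = "picard_iterate a A p\<^sub>0"
  obtain M where "0 \<le> M" and M: "\<And>s x y. s \<in> {a..b} \<Longrightarrow> \<bar>A s x y\<bar> \<le> M"
    using continuous_on_Icc_entries_bounded[of a b A, OF cont] by metis
  define m where "m = (\<Sum>y\<in>UNIV. \<bar>p\<^sub>0 y\<bar>)"
  define c where "c n = m * (M * CARD('x) * (b - a)) ^ Suc n / fact (Suc n)" for n
  have "0 \<le> m"
    by (simp add: m_def sum_nonneg)
  have step_le: "\<bar>?P (Suc n) t x - ?P n t x\<bar> \<le> c n" if t: "t \<in> {a..b}" for n t x
  proof -
    have "(M * CARD('x) * (t - a)) ^ Suc n \<le> (M * CARD('x) * (b - a)) ^ Suc n"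
      using t \<open>0 \<le> M\<close> by (intro power_mono mult_left_mono) auto
    then show ?thesis
      using picard_iterate_diff_bound[OF cont M t, where p\<^sub>0 = p\<^sub>0 and n = n and x = x] \<open>0 \<le> m\<close>
      unfolding c_def m_def[symmetric]
      by (meson divide_right_mono fact_ge_zero mult_left_mono order_trans)
  qed
  have summable_c: "summable c"
  proof -
    have "summable (\<lambda>n. m * (inverse (fact (Suc n)) * (M * CARD('x) * (b - a)) ^ Suc n))"
      using summable_exp[of "M * CARD('x) * (b - a)"]
      by (intro summable_mult) (subst summable_Suc_iff)
    then show ?thesis
      by (simp only: c_def[abs_def] divide_inverse mult_ac)
  qed
  have telescoping: "convergent (\<lambda>n. ?P n t x)" "\<bar>?P n t x\<bar> \<le> \<bar>?P 0 t x\<bar> + suminf c"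
    if "t \<in> {a..b}" for n t x
    using telescoping_bounded_convergent[of c "\<lambda>n. ?P n t x", OF summable_c step_le[OF that]] by blast+
  show thesis
  proof (rule that[of "\<lambda>t x. lim (\<lambda>n. ?P n t x)" "m + suminf c"])
    show "(\<lambda>n. ?P n t x) \<longlonglongrightarrow> lim (\<lambda>n. ?P n t x)" if "t \<in> {a..b}" for t x
      using telescoping(1)[OF that] by (simp add: convergent_LIMSEQ_iff)
    show "\<bar>?P n t x\<bar> \<le> m + suminf c" if "t \<in> {a..b}" for n t x
      using telescoping(2)[OF that, of n x] member_le_sum[of x UNIV "\<lambda>y. \<bar>p\<^sub>0 y\<bar>"]
      by (simp add: m_def)
  qed
qed

lemma picard_limit_integral_equation:
  fixes A :: "real \<Rightarrow> 'x::finite \<Rightarrow> 'x \<Rightarrow> real"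
  assumes cont: "\<And>x y. continuous_on {a..b} (\<lambda>t. A t x y)"
    and conv: "\<And>t x. t \<in> {a..b} \<Longrightarrow> (\<lambda>n. picard_iterate a A p\<^sub>0 n t x) \<longlonglongrightarrow> L t x"
    and bound: "\<And>n t x. t \<in> {a..b} \<Longrightarrow> \<bar>picard_iterate a A p\<^sub>0 n t x\<bar> \<le> B"
    and t: "t \<in> {a..b}"
  shows "(\<lambda>s. \<Sum>y\<in>UNIV. A s x y * L s y) integrable_on {a..t}"
    and "L t x = p\<^sub>0 x + integral {a..t} (\<lambda>s. \<Sum>y\<in>UNIV. A s x y * L s y)"
proof -
  let ?P = "picard_iterate a A p\<^sub>0"
  obtain M where "0 \<le> M" and M: "\<And>s x y. s \<in> {a..b} \<Longrightarrow> \<bar>A s x y\<bar> \<le> M"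
    using continuous_on_Icc_entries_bounded[of a b A, OF cont] by metis
  have dominated: "norm (\<Sum>y\<in>UNIV. A s x y * ?P n s y) \<le> CARD('x) * (M * B)" if "s \<in> {a..t}" for n s
  proof -
    have "s \<in> {a..b}" using that t by auto
    have "norm (\<Sum>y\<in>UNIV. A s x y * ?P n s y) \<le> (\<Sum>y\<in>UNIV. \<bar>A s x y\<bar> * \<bar>?P n s y\<bar>)"
      using sum_abs[of "\<lambda>y. A s x y * ?P n s y" UNIV] by (simp add: abs_mult)
    also have "\<dots> \<le> (\<Sum>y::'x\<in>UNIV. M * B)"
      using M[OF \<open>s \<in> {a..b}\<close>] bound[OF \<open>s \<in> {a..b}\<close>] \<open>0 \<le> M\<close>
      by (intro sum_mono mult_mono) auto
    finally show ?thesis by simp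
  qed
  have iterate_integrable:
    "(\<lambda>s. \<Sum>y\<in>UNIV. A s x y * ?P n s y) integrable_on {a..t}" for n
    using t by (intro linear_integrand_integrable[OF cont continuous_on_picard_iterate[OF cont]]) auto
  have bound_integrable: "(\<lambda>_. CARD('x) * (M * B)) integrable_on {a..t}"
    by (rule integrable_continuous_interval) (rule continuous_on_const)
  have pointwise: "(\<lambda>n. \<Sum>y\<in>UNIV. A s x y * ?P n s y) \<longlonglongrightarrow> (\<Sum>y\<in>UNIV. A s x y * L s y)"
    if "s \<in> {a..t}" for s
    using that t by (intro tendsto_sum tendsto_mult_left conv) auto
  note limit = dominated_convergence[where f = "\<lambda>n s. \<Sum>y\<in>UNIV. A s x y * ?P n s y"
      and g = "\<lambda>s. \<Sum>y\<in>UNIV. A s x y * L s y" and h = "\<lambda>_. CARD('x) * (M * B)" and S = "{a..t}",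
      OF iterate_integrable bound_integrable dominated pointwise]
  have "(\<lambda>n. ?P (Suc n) t x) \<longlonglongrightarrow> p\<^sub>0 x + integral {a..t} (\<lambda>s. \<Sum>y\<in>UNIV. A s x y * L s y)"
    unfolding picard_iterate.simps by (rule tendsto_add[OF tendsto_const limit(2)])
  moreover have "(\<lambda>n. ?P (Suc n) t x) \<longlonglongrightarrow> L t x"
    using conv[OF t] by (rule LIMSEQ_Suc)
  ultimately show "L t x = p\<^sub>0 x + integral {a..t} (\<lambda>s. \<Sum>y\<in>UNIV. A s x y * L s y)"
    using LIMSEQ_unique by blast
  show "(\<lambda>s. \<Sum>y\<in>UNIV. A s x y * L s y) integrable_on {a..t}"
    by (rule limit(1))
qed

lemma picard_limit_solves_linear_ode:
  fixes A :: "real \<Rightarrow> 'x::finite \<Rightarrow> 'x \<Rightarrow> real"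
  assumes "a \<le> b" and cont: "\<And>x y. continuous_on {a..b} (\<lambda>t. A t x y)"
    and conv: "\<And>t x. t \<in> {a..b} \<Longrightarrow> (\<lambda>n. picard_iterate a A p\<^sub>0 n t x) \<longlonglongrightarrow> L t x"
    and bound: "\<And>n t x. t \<in> {a..b} \<Longrightarrow> \<bar>picard_iterate a A p\<^sub>0 n t x\<bar> \<le> B"
  shows "L a = p\<^sub>0" and "solves_linear_ode a b A L"
proof -
  note integral_equation = picard_limit_integral_equation[OF cont conv bound]
  let ?g = "\<lambda>x s. \<Sum>y\<in>UNIV. A s x y * L s y"
  show "L a = p\<^sub>0"
    using integral_equation(2)[of a] \<open>a \<le> b\<close> by auto
  have "continuous_on {a..b} (\<lambda>t. L t x)" for x
  proof (rule continuous_on_eq)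
    show "continuous_on {a..b} (\<lambda>t. p\<^sub>0 x + integral {a..t} (?g x))"
      using integral_equation(1)[of b x] \<open>a \<le> b\<close>
      by (intro continuous_intros indefinite_integral_continuous_1) auto
  qed (use integral_equation(2) in auto)
  then have g_cont: "continuous_on {a..b} (?g x)" for x
    by (intro continuous_intros cont)
  show "solves_linear_ode a b A L"
    unfolding solves_linear_ode_def
  proof (intro ballI allI)
    fix t x assume t: "t \<in> {a..b}"
    have "((\<lambda>u. p\<^sub>0 x + integral {a..u} (?g x)) has_real_derivative ?g x t) (at t within {a..b})"
      using integral_has_vector_derivative[OF g_cont t]
      by (auto intro!: derivative_eq_intros simp: has_real_derivative_iff_has_vector_derivative)
    then show "((\<lambda>s. L s x) has_real_derivative ?g x t) (at t within {a..b})"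
      by (rule has_field_derivative_transform_within[where d = 1]) (use t integral_equation(2) in auto)
  qed
qed

lemma linear_ode_exists:
  fixes A :: "real \<Rightarrow> 'x::finite \<Rightarrow> 'x \<Rightarrow> real"
  assumes "a \<le> b" and cont: "\<And>x y. continuous_on {a..b} (\<lambda>t. A t x y)"
  obtains p where "p a = p\<^sub>0" and "solves_linear_ode a b A p"
proof -
  obtain L B where "\<And>t x. t \<in> {a..b} \<Longrightarrow> (\<lambda>n. picard_iterate a A p\<^sub>0 n t x) \<longlonglongrightarrow> L t x"
    and "\<And>n t x. t \<in> {a..b} \<Longrightarrow> \<bar>picard_iterate a A p\<^sub>0 n t x\<bar> \<le> B"
    using picard_iterate_converges[of a b A, OF assms] by blast
  from picard_limit_solves_linear_ode[of a b A, OF assms this] show thesis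
    by (rule that)
qed

lemma picard_iterate_ge_initial:
  fixes A :: "real \<Rightarrow> 'x::finite \<Rightarrow> 'x \<Rightarrow> real"
  assumes cont: "\<And>x y. continuous_on {a..b} (\<lambda>t. A t x y)"
    and A_nonneg: "\<And>t x y. t \<in> {a..b} \<Longrightarrow> 0 \<le> A t x y" and start: "\<And>x. 0 \<le> p\<^sub>0 x"
  shows "\<forall>t\<in>{a..b}. \<forall>x. p\<^sub>0 x \<le> picard_iterate a A p\<^sub>0 n t x"
proof (induction n)
  case (Suc n)
  let ?P = "picard_iterate a A p\<^sub>0 n"
  show ?case
  proof (intro ballI allI)
    fix t x assume t: "t \<in> {a..b}"
    have "0 \<le> integral {a..t} (\<lambda>s. \<Sum>y\<in>UNIV. A s x y * ?P s y)"
    proof (rule integral_nonneg)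
      show "(\<lambda>s. \<Sum>y\<in>UNIV. A s x y * ?P s y) integrable_on {a..t}"
        using t by (intro linear_integrand_integrable[OF cont continuous_on_picard_iterate[OF cont]]) auto
      fix s assume "s \<in> {a..t}"
      then have "s \<in> {a..b}"
        using t by auto
      have "0 \<le> ?P s y" for y
        using Suc.IH \<open>s \<in> {a..b}\<close> start[of y] by (meson order_trans)
      with A_nonneg[OF \<open>s \<in> {a..b}\<close>] show "0 \<le> (\<Sum>y\<in>UNIV. A s x y * ?P s y)"
        by (simp add: sum_nonneg)
    qed
    then show "p\<^sub>0 x \<le> picard_iterate a A p\<^sub>0 (Suc n) t x"
      by simp
  qed
qed simp

lemma linear_ode_nonneg_matrix_ge_initial:
  fixes A :: "real \<Rightarrow> 'x::finite \<Rightarrow> 'x \<Rightarrow> real"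
  assumes "a \<le> b" and cont: "\<And>x y. continuous_on {a..b} (\<lambda>t. A t x y)"
    and A_nonneg: "\<And>t x y. t \<in> {a..b} \<Longrightarrow> 0 \<le> A t x y"
    and sol: "solves_linear_ode a b A p" and start: "\<And>x. 0 \<le> p a x" and t: "t \<in> {a..b}"
  shows "p a x \<le> p t x"
proof -
  let ?P = "picard_iterate a A (p a)"
  obtain L B where conv: "\<And>t x. t \<in> {a..b} \<Longrightarrow> (\<lambda>n. ?P n t x) \<longlonglongrightarrow> L t x"
    and bound: "\<And>n t x. t \<in> {a..b} \<Longrightarrow> \<bar>?P n t x\<bar> \<le> B"
    using picard_iterate_converges[of a b A "p a", OF assms(1,2)] by blast
  have "p a x \<le> L t x"
    by (rule LIMSEQ_le_const[OF conv[OF t]])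
       (use picard_iterate_ge_initial[of a b A "p a", OF cont A_nonneg start] t in blast)
  moreover have "L t = p t"
    using picard_limit_solves_linear_ode[of a b A, OF assms(1,2) conv bound] sol t
    by (intro linear_ode_unique[of a b A L p t, OF cont]) auto
  ultimately show ?thesis
    by simp
qed

lemma linear_ode_metzler_lower_bound:
  fixes A :: "real \<Rightarrow> 'x::finite \<Rightarrow> 'x \<Rightarrow> real"
  assumes "a \<le> b" and cont: "\<And>x y. continuous_on {a..b} (\<lambda>t. A t x y)"
    and off_diag: "\<And>t x y. t \<in> {a..b} \<Longrightarrow> x \<noteq> y \<Longrightarrow> 0 \<le> A t x y"
    and sol: "solves_linear_ode a b A p" and start: "\<And>x. 0 \<le> p a x"
  obtains c where "\<And>t x. t \<in> {a..b} \<Longrightarrow> exp (- c * (t - a)) * p a x \<le> p t x"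
proof -
  obtain M where M: "\<And>s x y. s \<in> {a..b} \<Longrightarrow> \<bar>A s x y\<bar> \<le> M"
    using continuous_on_Icc_entries_bounded[of a b A, OF cont] by metis
  \<comment> \<open>Shifting the diagonal by M makes the matrix nonnegative; w solves the shifted system.\<close>
  define A' where "A' t x y = A t x y + (if x = y then M else 0)" for t x y
  define w where "w t x = exp (M * (t - a)) * p t x" for t x
  have "solves_linear_ode a b A' w"
    unfolding solves_linear_ode_def
  proof (intro ballI allI)
    fix t x assume t: "t \<in> {a..b}"
    have "((\<lambda>s. w s x) has_real_derivative
        M * w t x + exp (M * (t - a)) * (\<Sum>y\<in>UNIV. A t x y * p t y)) (at t within {a..b})"
      using sol t unfolding solves_linear_ode_def w_def
      by (auto intro!: derivative_eq_intros simp: algebra_simps)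
    also have "M * w t x + exp (M * (t - a)) * (\<Sum>y\<in>UNIV. A t x y * p t y) = (\<Sum>y\<in>UNIV. A' t x y * w t y)"
    proof -
      have "(\<Sum>y\<in>UNIV. A' t x y * w t y)
          = (\<Sum>y\<in>UNIV. A t x y * w t y) + (\<Sum>y\<in>UNIV. (if x = y then M else 0) * w t y)"
        by (simp add: A'_def distrib_right sum.distrib)
      also have "(\<Sum>y\<in>UNIV. (if x = y then M else 0) * w t y) = M * w t x"
        by (subst sum.remove[of UNIV x]) auto
      also have "(\<Sum>y\<in>UNIV. A t x y * w t y) = exp (M * (t - a)) * (\<Sum>y\<in>UNIV. A t x y * p t y)"
        by (simp add: w_def sum_distrib_left mult_ac)
      finally show ?thesis
        by simp
    qed
    finally show "((\<lambda>s. w s x) has_real_derivative (\<Sum>y\<in>UNIV. A' t x y * w t y)) (at t within {a..b})" .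
  qed
  moreover have "0 \<le> A' t x y" if "t \<in> {a..b}" for t x y
    using M[OF that, of x y] off_diag[OF that, of x y] by (auto simp: A'_def)
  moreover have "continuous_on {a..b} (\<lambda>t. A' t x y)" for x y
    unfolding A'_def by (intro continuous_intros cont)
  ultimately have "p a x \<le> w t x" if "t \<in> {a..b}" for t x
    using linear_ode_nonneg_matrix_ge_initial[of a b A' w t x] \<open>a \<le> b\<close> start that
    by (simp add: w_def)
  then have "exp (- M * (t - a)) * p a x \<le> exp (- M * (t - a)) * w t x" if "t \<in> {a..b}" for t x
    using that by (intro mult_left_mono) auto
  then show thesis
    by (intro that[of M]) (simp add: w_def mult.assoc[symmetric] flip: exp_add)
qed

section \<open>Kolmogorov equations\<close>

(* The forward equation in flow never reads the diagonal of Q, so the diagonal here is rebuilt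
   from the off-diagonal rates. *)
definition forward_matrix :: "(real \<Rightarrow> 'x::finite \<Rightarrow> 'x \<Rightarrow> real) \<Rightarrow> real \<Rightarrow> 'x \<Rightarrow> 'x \<Rightarrow> real" where
  "forward_matrix Q t x y = (if x = y then - (\<Sum>z\<in>UNIV - {x}. Q t x z) else Q t y x)"

definition kolmogorov_forward ::
    "real \<Rightarrow> real \<Rightarrow> (real \<Rightarrow> 'x::finite \<Rightarrow> 'x \<Rightarrow> real) \<Rightarrow> (real \<Rightarrow> 'x \<Rightarrow> real) \<Rightarrow> bool" where
  "kolmogorov_forward a b Q p \<longleftrightarrow>
     (\<forall>t\<in>{a..b}. \<forall>x. ((\<lambda>s. p s x) has_real_derivative
        (\<Sum>y\<in>UNIV - {x}. Q t y x * p t y) - (\<Sum>y\<in>UNIV - {x}. Q t x y * p t x)) (at t within {a..b}))"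

definition kolmogorov_backward ::
    "real \<Rightarrow> real \<Rightarrow> (real \<Rightarrow> 'x::finite \<Rightarrow> 'x \<Rightarrow> real) \<Rightarrow> (real \<Rightarrow> 'x \<Rightarrow> real) \<Rightarrow> bool" where
  "kolmogorov_backward a b Q \<phi> \<longleftrightarrow>
     (\<forall>t\<in>{a..b}. \<forall>x. ((\<lambda>s. \<phi> s x) has_real_derivative - (\<Sum>y\<in>UNIV. Q t x y * \<phi> t y))
                        (at t within {a..b}))"

lemma sum_forward_matrix:
  "(\<Sum>y\<in>UNIV. forward_matrix Q t x y * p y)
     = (\<Sum>y\<in>UNIV - {x}. Q t y x * p y) - (\<Sum>y\<in>UNIV - {x}. Q t x y * p x)"
proof -
  have "(\<Sum>y\<in>UNIV. forward_matrix Q t x y * p y)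
      = forward_matrix Q t x x * p x + (\<Sum>y\<in>UNIV - {x}. forward_matrix Q t x y * p y)"
    by (subst sum.remove[of UNIV x]) auto
  also have "(\<Sum>y\<in>UNIV - {x}. forward_matrix Q t x y * p y) = (\<Sum>y\<in>UNIV - {x}. Q t y x * p y)"
    by (rule sum.cong) (auto simp: forward_matrix_def)
  finally show ?thesis
    by (simp add: forward_matrix_def sum_distrib_right)
qed

lemma kolmogorov_forward_iff_linear_ode:
  "kolmogorov_forward a b Q p \<longleftrightarrow> solves_linear_ode a b (forward_matrix Q) p"
  unfolding kolmogorov_forward_def solves_linear_ode_def sum_forward_matrix ..

lemma continuous_on_forward_matrix:
  assumes "\<And>x y. continuous_on {a..b} (\<lambda>t. Q t x y)"
  shows "continuous_on {a..b} (\<lambda>t. forward_matrix Q t x y)"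
  by (cases "x = y") (auto simp: forward_matrix_def intro!: continuous_intros assms)

lemma flow_eq_The:
  "flow a b Q p\<^sub>0 = (THE p. p a = p\<^sub>0 \<and> solves_linear_ode a b (forward_matrix Q) p
                                \<and> (\<forall>t. t \<notin> {a..b} \<longrightarrow> p t = (\<lambda>_. 0)))"
  unfolding flow_def kolmogorov_forward_iff_linear_ode[symmetric] kolmogorov_forward_def ..

lemma flow_start_and_solves:
  fixes Q :: "real \<Rightarrow> 'x::finite \<Rightarrow> 'x \<Rightarrow> real"
  assumes "a \<le> b" and cont: "\<And>x y. continuous_on {a..b} (\<lambda>t. Q t x y)"
  shows "flow a b Q p\<^sub>0 a = p\<^sub>0" and "kolmogorov_forward a b Q (flow a b Q p\<^sub>0)"
proof -
  note cont' = continuous_on_forward_matrix[of a b Q, OF cont]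
  obtain p where "p a = p\<^sub>0" and sol: "solves_linear_ode a b (forward_matrix Q) p"
    using linear_ode_exists[of a b "forward_matrix Q", OF \<open>a \<le> b\<close> cont'] by blast
  define p' where "p' t = (if t \<in> {a..b} then p t else (\<lambda>_. 0))" for t
  have sol': "solves_linear_ode a b (forward_matrix Q) p'"
    unfolding solves_linear_ode_def
  proof (intro ballI allI)
    fix t x assume t: "t \<in> {a..b}"
    have "((\<lambda>s. p s x) has_real_derivative (\<Sum>y\<in>UNIV. forward_matrix Q t x y * p' t y)) (at t within {a..b})"
      using sol t by (simp add: solves_linear_ode_def p'_def)
    then show "((\<lambda>s. p' s x) has_real_derivative (\<Sum>y\<in>UNIV. forward_matrix Q t x y * p' t y))
        (at t within {a..b})"
      by (rule has_field_derivative_transform_within[where d = 1]) (use t in \<open>auto simp: p'_def\<close>)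
  qed
  have "flow a b Q p\<^sub>0 = p'"
    unfolding flow_eq_The
  proof (rule the_equality)
    show "p' a = p\<^sub>0 \<and> solves_linear_ode a b (forward_matrix Q) p' \<and> (\<forall>t. t \<notin> {a..b} \<longrightarrow> p' t = (\<lambda>_. 0))"
      using sol' \<open>p a = p\<^sub>0\<close> \<open>a \<le> b\<close> by (simp add: p'_def)
  next
    fix q
    assume "q a = p\<^sub>0 \<and> solves_linear_ode a b (forward_matrix Q) q \<and> (\<forall>t. t \<notin> {a..b} \<longrightarrow> q t = (\<lambda>_. 0))"
    then have q_start: "q a = p' a" and q_sol: "solves_linear_ode a b (forward_matrix Q) q"
      and outside: "\<And>t. t \<notin> {a..b} \<Longrightarrow> q t = p' t"
      using \<open>p a = p\<^sub>0\<close> \<open>a \<le> b\<close> by (auto simp: p'_def)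
    show "q = p'"
    proof
      fix t
      show "q t = p' t"
        using linear_ode_unique[of a b "forward_matrix Q" q p' t, OF cont' q_sol sol' q_start] outside
        by (cases "t \<in> {a..b}") auto
    qed
  qed
  then show "flow a b Q p\<^sub>0 a = p\<^sub>0" and "kolmogorov_forward a b Q (flow a b Q p\<^sub>0)"
    using sol' \<open>p a = p\<^sub>0\<close> \<open>a \<le> b\<close> by (auto simp: p'_def kolmogorov_forward_iff_linear_ode)
qed

lemma flow_eqI:
  fixes Q :: "real \<Rightarrow> 'x::finite \<Rightarrow> 'x \<Rightarrow> real"
  assumes "a \<le> b" and cont: "\<And>x y. continuous_on {a..b} (\<lambda>t. Q t x y)"
    and "kolmogorov_forward a b Q p" and "p a = p\<^sub>0" and "t \<in> {a..b}"
  shows "flow a b Q p\<^sub>0 t = p t"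
  using flow_start_and_solves[of a b Q p\<^sub>0, OF \<open>a \<le> b\<close> cont] assms(3-)
  by (intro linear_ode_unique[of a b "forward_matrix Q" "flow a b Q p\<^sub>0" p t,
        OF continuous_on_forward_matrix[of a b Q, OF cont]])
     (auto simp: kolmogorov_forward_iff_linear_ode)

lemma sum_off_diagonal_swap:
  fixes f :: "'x::finite \<Rightarrow> 'x \<Rightarrow> 'a::comm_monoid_add"
  shows "(\<Sum>x\<in>UNIV. \<Sum>y\<in>UNIV - {x}. f x y) = (\<Sum>x\<in>UNIV. \<Sum>y\<in>UNIV - {x}. f y x)"
proof -
  have off_diag: "UNIV - {x} = {y \<in> UNIV. y \<noteq> x}" for x :: 'x
    by auto
  have "(\<Sum>x\<in>UNIV. \<Sum>y\<in>{y \<in> UNIV. y \<noteq> x}. f x y) = (\<Sum>y\<in>UNIV. \<Sum>x\<in>{x \<in> UNIV. y \<noteq> x}. f x y)"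
    by (rule sum.swap_restrict) simp_all
  also have "\<dots> = (\<Sum>y\<in>UNIV. \<Sum>x\<in>{x \<in> UNIV. x \<noteq> y}. f x y)"
    by (intro sum.cong refl) auto
  finally show ?thesis
    unfolding off_diag .
qed

lemma kolmogorov_forward_sum_const:
  assumes sol: "kolmogorov_forward a b Q p" and t: "t \<in> {a..b}"
  shows "(\<Sum>x\<in>UNIV. p t x) = (\<Sum>x\<in>UNIV. p a x)"
proof -
  have "((\<lambda>s. \<Sum>x\<in>UNIV. p s x) has_real_derivative 0) (at s within {a..b})" if "s \<in> {a..b}" for s
  proof -
    have "((\<lambda>s. \<Sum>x\<in>UNIV. p s x) has_real_derivative
        (\<Sum>x\<in>UNIV. (\<Sum>y\<in>UNIV - {x}. Q s y x * p s y) - (\<Sum>y\<in>UNIV - {x}. Q s x y * p s x)))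
        (at s within {a..b})"
      using sol that unfolding kolmogorov_forward_def by (intro DERIV_sum) auto
    then show ?thesis
      using sum_off_diagonal_swap[of "\<lambda>x y. Q s x y * p s x"] by (simp add: sum_subtractf)
  qed
  then obtain c where "\<forall>s\<in>{a..b}. (\<Sum>x\<in>UNIV. p s x) = c"
    using has_field_derivative_zero_constant[of "{a..b}" "\<lambda>s. \<Sum>x\<in>UNIV. p s x"] by auto
  then show ?thesis
    using t by auto
qed

lemma flow_nonneg:
  fixes Q :: "real \<Rightarrow> 'x::finite \<Rightarrow> 'x \<Rightarrow> real"
  assumes "a \<le> b" and cont: "\<And>x y. continuous_on {a..b} (\<lambda>t. Q t x y)"
    and off_diag: "\<And>t x y. t \<in> {a..b} \<Longrightarrow> x \<noteq> y \<Longrightarrow> 0 \<le> Q t x y"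
    and start: "\<And>x. 0 \<le> p\<^sub>0 x" and t: "t \<in> {a..b}"
  shows "0 \<le> flow a b Q p\<^sub>0 t x"
proof -
  note flow = flow_start_and_solves[of a b Q p\<^sub>0, OF \<open>a \<le> b\<close> cont]
  have cont': "continuous_on {a..b} (\<lambda>t. forward_matrix Q t x y)" for x y
    by (rule continuous_on_forward_matrix[of a b Q, OF cont])
  have off_diag': "0 \<le> forward_matrix Q t x y" if "t \<in> {a..b}" "x \<noteq> y" for t x y
    using off_diag that by (simp add: forward_matrix_def)
  have sol: "solves_linear_ode a b (forward_matrix Q) (flow a b Q p\<^sub>0)"
    using flow(2) by (simp add: kolmogorov_forward_iff_linear_ode)
  have start': "0 \<le> flow a b Q p\<^sub>0 a x" for x
    using flow(1) start by simp
  obtain c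
    where "\<And>t x. t \<in> {a..b} \<Longrightarrow> exp (- c * (t - a)) * flow a b Q p\<^sub>0 a x \<le> flow a b Q p\<^sub>0 t x"
    using linear_ode_metzler_lower_bound[of a b "forward_matrix Q" "flow a b Q p\<^sub>0",
        OF \<open>a \<le> b\<close> cont' off_diag' sol start'] by blast
  moreover have "0 \<le> exp (- c * (t - a)) * flow a b Q p\<^sub>0 a x"
    using start' by simp
  ultimately show ?thesis
    using t by (meson order_trans)
qed

lemma flow_superposition:
  fixes Q :: "real \<Rightarrow> 'x::finite \<Rightarrow> 'x \<Rightarrow> real"
  assumes "a \<le> b" and cont: "\<And>x y. continuous_on {a..b} (\<lambda>t. Q t x y)" and t: "t \<in> {a..b}"
  shows "flow a b Q p\<^sub>0 t z = (\<Sum>x\<in>UNIV. p\<^sub>0 x * flow a b Q (\<lambda>y. if y = x then 1 else 0) t z)"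
proof -
  define F where "F x = flow a b Q (\<lambda>y. if y = x then 1 else 0)" for x
  define p where "p t z = (\<Sum>x\<in>UNIV. p\<^sub>0 x * F x t z)" for t z
  have F: "F x a = (\<lambda>y. if y = x then 1 else 0)" "kolmogorov_forward a b Q (F x)" for x
    unfolding F_def by (rule flow_start_and_solves[OF \<open>a \<le> b\<close> cont])+
  have "kolmogorov_forward a b Q p"
    unfolding kolmogorov_forward_def
  proof (intro ballI allI)
    fix s y assume s: "s \<in> {a..b}"
    have "((\<lambda>s. p s y) has_real_derivative (\<Sum>x\<in>UNIV. p\<^sub>0 x *
        ((\<Sum>w\<in>UNIV - {y}. Q s w y * F x s w) - (\<Sum>w\<in>UNIV - {y}. Q s y w * F x s y)))) (at s within {a..b})"
      unfolding p_def using F(2) s by (intro DERIV_sum DERIV_cmult) (auto simp: kolmogorov_forward_def)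
    also have "(\<Sum>x\<in>UNIV. p\<^sub>0 x *
        ((\<Sum>w\<in>UNIV - {y}. Q s w y * F x s w) - (\<Sum>w\<in>UNIV - {y}. Q s y w * F x s y)))
      = (\<Sum>x\<in>UNIV. \<Sum>w\<in>UNIV - {y}. Q s w y * (p\<^sub>0 x * F x s w))
          - (\<Sum>x\<in>UNIV. \<Sum>w\<in>UNIV - {y}. Q s y w * (p\<^sub>0 x * F x s y))"
      by (simp add: right_diff_distrib sum_subtractf sum_distrib_left mult_ac)
    also have "\<dots> = (\<Sum>w\<in>UNIV - {y}. Q s w y * p s w) - (\<Sum>w\<in>UNIV - {y}. Q s y w * p s y)"
      by (subst (1 2) sum.swap) (simp add: p_def sum_distrib_left)
    finally show "((\<lambda>s. p s y) has_real_derivative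
        (\<Sum>w\<in>UNIV - {y}. Q s w y * p s w) - (\<Sum>w\<in>UNIV - {y}. Q s y w * p s y)) (at s within {a..b})" .
  qed
  moreover have "p a = p\<^sub>0"
    by (simp add: p_def F(1) fun_eq_iff if_distrib cong: if_cong)
  ultimately show ?thesis
    using flow_eqI[of a b Q, OF \<open>a \<le> b\<close> cont _ _ t] by (simp add: p_def F_def)
qed

lemma kolmogorov_forward_cong_on_support:
  assumes "kolmogorov_forward a b Q p"
    and "\<And>t x y. t \<in> {a..b} \<Longrightarrow> x \<noteq> y \<Longrightarrow> p t x * Q t x y = p t x * Q' t x y"
  shows "kolmogorov_forward a b Q' p"
  unfolding kolmogorov_forward_def
proof (intro ballI allI)
  fix t x assume t: "t \<in> {a..b}"
  have in_rate: "Q t y x * p t y = Q' t y x * p t y" and out_rate: "Q t x y * p t x = Q' t x y * p t x"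
    if "y \<in> UNIV - {x}" for y
    using assms(2)[OF t, of y x] assms(2)[OF t, of x y] that by (auto simp: mult.commute)
  have "(\<Sum>y\<in>UNIV - {x}. Q t y x * p t y) = (\<Sum>y\<in>UNIV - {x}. Q' t y x * p t y)"
    using in_rate by (rule sum.cong[OF refl])
  moreover have "(\<Sum>y\<in>UNIV - {x}. Q t x y * p t x) = (\<Sum>y\<in>UNIV - {x}. Q' t x y * p t x)"
    using out_rate by (rule sum.cong[OF refl])
  moreover have "((\<lambda>s. p s x) has_real_derivative
      (\<Sum>y\<in>UNIV - {x}. Q t y x * p t y) - (\<Sum>y\<in>UNIV - {x}. Q t x y * p t x)) (at t within {a..b})"
    using assms(1) t unfolding kolmogorov_forward_def by blast
  ultimately
  show "((\<lambda>s. p s x) has_real_derivative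
      (\<Sum>y\<in>UNIV - {x}. Q' t y x * p t y) - (\<Sum>y\<in>UNIV - {x}. Q' t x y * p t x)) (at t within {a..b})"
    by simp
qed

lemma kolmogorov_backward_time_reversal:
  assumes sol: "solves_linear_ode 0 T (\<lambda>s. Q (T - s)) \<psi>"
  shows "kolmogorov_backward 0 T Q (\<lambda>t. \<psi> (T - t))"
  unfolding kolmogorov_backward_def
proof (intro ballI allI)
  fix t x assume t: "t \<in> {0..T}"
  have reflect: "(\<lambda>s. T - s) ` {0..T} = {0..T}"
    by (auto simp: image_iff intro: bexI[of _ "T - _"])
  have "T - t \<in> {0..T}"
    using t by auto
  then have "((\<lambda>s. \<psi> s x) has_real_derivative (\<Sum>y\<in>UNIV. Q (T - (T - t)) x y * \<psi> (T - t) y))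
      (at (T - t) within (\<lambda>s. T - s) ` {0..T})"
    unfolding reflect using sol unfolding solves_linear_ode_def by blast
  moreover have "((\<lambda>s. T - s) has_real_derivative -1) (at t within {0..T})"
    by (auto intro!: derivative_eq_intros)
  ultimately have "((\<lambda>s. \<psi> s x) \<circ> (\<lambda>s. T - s) has_real_derivative
      (\<Sum>y\<in>UNIV. Q (T - (T - t)) x y * \<psi> (T - t) y) * -1) (at t within {0..T})"
    by (rule DERIV_image_chain)
  then show "((\<lambda>s. \<psi> (T - s) x) has_real_derivative - (\<Sum>y\<in>UNIV. Q t x y * \<psi> (T - t) y))
      (at t within {0..T})"
    by (simp add: o_def)
qed

lemma kolmogorov_backward_positive_solution:
  fixes Q :: "real \<Rightarrow> 'x::finite \<Rightarrow> 'x \<Rightarrow> real"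
  assumes "0 \<le> T" and gen: "is_generator T Q" and h: "\<And>x. 0 < h x"
  obtains \<phi> where "\<phi> T = h" and "\<And>t x. t \<in> {0..T} \<Longrightarrow> 0 < \<phi> t x"
    and "kolmogorov_backward 0 T Q \<phi>"
proof -
  let ?B = "\<lambda>s. Q (T - s)"
  have "continuous_on {0..T} (\<lambda>t. Q t x y)" for x y
    using gen by (simp add: is_generator_def)
  then have B_cont: "continuous_on {0..T} (\<lambda>s. ?B s x y)" for x y
    by (rule continuous_on_compose2) (auto intro!: continuous_intros)
  have B_off_diag: "0 \<le> ?B s x y" if "s \<in> {0..T}" "x \<noteq> y" for s x y
    using gen that by (auto simp: is_generator_def)
  obtain \<psi> where "\<psi> 0 = h" and \<psi>: "solves_linear_ode 0 T ?B \<psi>"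
    using linear_ode_exists[of 0 T ?B, OF \<open>0 \<le> T\<close> B_cont] by blast
  then obtain c where c: "\<And>s x. s \<in> {0..T} \<Longrightarrow> exp (- c * (s - 0)) * h x \<le> \<psi> s x"
    using linear_ode_metzler_lower_bound[of 0 T ?B \<psi>, OF \<open>0 \<le> T\<close> B_cont B_off_diag \<psi>] h
    by (metis less_imp_le)
  have "0 < \<psi> (T - t) x" if "t \<in> {0..T}" for t x
    by (rule less_le_trans[OF _ c[of "T - t" x]]) (use h[of x] that in auto)
  then show thesis
    using \<open>\<psi> 0 = h\<close> kolmogorov_backward_time_reversal[OF \<psi>] by (intro that[of "\<lambda>t. \<psi> (T - t)"]) auto
qed

definition doob_transform ::
    "(real \<Rightarrow> 'x::finite \<Rightarrow> 'x \<Rightarrow> real) \<Rightarrow> (real \<Rightarrow> 'x \<Rightarrow> real) \<Rightarrow> real \<Rightarrow> 'x \<Rightarrow> 'x \<Rightarrow> real" where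
  "doob_transform Q \<phi> t x y =
     (if x = y then - (\<Sum>z\<in>UNIV - {x}. Q t x z * \<phi> t z / \<phi> t x) else Q t x y * \<phi> t y / \<phi> t x)"

lemma is_generator_doob_transform:
  fixes Q :: "real \<Rightarrow> 'x::finite \<Rightarrow> 'x \<Rightarrow> real"
  assumes gen: "is_generator T Q" and pos: "\<And>t x. t \<in> {0..T} \<Longrightarrow> 0 < \<phi> t x"
    and cont: "\<And>x. continuous_on {0..T} (\<lambda>t. \<phi> t x)"
  shows "is_generator T (doob_transform Q \<phi>)"
  unfolding is_generator_def
proof (intro conjI ballI allI impI)
  fix t and x y :: 'x assume "t \<in> {0..T}" "x \<noteq> y"
  then show "0 \<le> doob_transform Q \<phi> t x y"
    using gen pos[of t x] pos[of t y] by (simp add: is_generator_def doob_transform_def)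
next
  fix t and x :: 'x
  have "(\<Sum>y\<in>UNIV - {x}. doob_transform Q \<phi> t x y) = (\<Sum>y\<in>UNIV - {x}. Q t x y * \<phi> t y / \<phi> t x)"
    by (rule sum.cong) (auto simp: doob_transform_def)
  then show "doob_transform Q \<phi> t x x = - (\<Sum>y\<in>UNIV - {x}. doob_transform Q \<phi> t x y)"
    by (simp add: doob_transform_def)
next
  fix x y :: 'x
  have "continuous_on {0..T} (\<lambda>t. Q t x y)" for x y
    using gen by (simp add: is_generator_def)
  moreover have "\<phi> t x \<noteq> 0" if "t \<in> {0..T}" for t x
    using pos[OF that, of x] by simp
  ultimately show "continuous_on {0..T} (\<lambda>t. doob_transform Q \<phi> t x y)"
    unfolding doob_transform_def using cont by (cases "x = y") (auto intro!: continuous_intros)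
qed

lemma kolmogorov_forward_doob_transform:
  fixes Q :: "real \<Rightarrow> 'x::finite \<Rightarrow> 'x \<Rightarrow> real"
  assumes diag: "\<And>t x. t \<in> {a..b} \<Longrightarrow> Q t x x = - (\<Sum>y\<in>UNIV - {x}. Q t x y)"
    and pos: "\<And>t x. t \<in> {a..b} \<Longrightarrow> 0 < \<phi> t x"
    and fwd: "kolmogorov_forward a b Q p" and bwd: "kolmogorov_backward a b Q \<phi>"
  shows "kolmogorov_forward a b (doob_transform Q \<phi>) (\<lambda>t x. p t x * \<phi> t x / c)"
  unfolding kolmogorov_forward_def
proof (intro ballI allI)
  fix t x assume t: "t \<in> {a..b}"
  let ?Q\<phi> = "doob_transform Q \<phi>"
  have nonzero: "\<phi> t y \<noteq> 0" for y
    using pos[OF t, of y] by simp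
  define inflow where "inflow = (\<Sum>y\<in>UNIV - {x}. Q t y x * p t y)"
  define out_rate where "out_rate = (\<Sum>y\<in>UNIV - {x}. Q t x y)"
  define tilted where "tilted = (\<Sum>y\<in>UNIV - {x}. Q t x y * \<phi> t y)"
  have "(\<Sum>y\<in>UNIV. Q t x y * \<phi> t y) = Q t x x * \<phi> t x + tilted"
    unfolding tilted_def by (subst sum.remove[of UNIV x]) auto
  then have "- (\<Sum>y\<in>UNIV. Q t x y * \<phi> t y) = out_rate * \<phi> t x - tilted"
    using diag[OF t, of x] by (simp add: out_rate_def)
  moreover have "((\<lambda>s. \<phi> s x) has_real_derivative - (\<Sum>y\<in>UNIV. Q t x y * \<phi> t y)) (at t within {a..b})"
    using bwd t by (simp add: kolmogorov_backward_def)
  ultimately have \<phi>_deriv: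
    "((\<lambda>s. \<phi> s x) has_real_derivative out_rate * \<phi> t x - tilted) (at t within {a..b})"
    by simp
  have p_deriv: "((\<lambda>s. p s x) has_real_derivative inflow - out_rate * p t x) (at t within {a..b})"
    using fwd t by (simp add: kolmogorov_forward_def inflow_def out_rate_def sum_distrib_right)
  have "((\<lambda>s. p s x * \<phi> s x / c) has_real_derivative
      (p t x * (out_rate * \<phi> t x - tilted) + (inflow - out_rate * p t x) * \<phi> t x) / c) (at t within {a..b})"
    by (rule DERIV_cdivide[OF DERIV_mult'[OF p_deriv \<phi>_deriv]])
  also have "(p t x * (out_rate * \<phi> t x - tilted) + (inflow - out_rate * p t x) * \<phi> t x) / c
      = \<phi> t x * inflow / c - p t x * tilted / c"
    by (cases "c = 0") (simp_all add: field_simps)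
  moreover have "(\<Sum>y\<in>UNIV - {x}. ?Q\<phi> t y x * (p t y * \<phi> t y / c)) = \<phi> t x * inflow / c"
    unfolding inflow_def sum_distrib_left sum_divide_distrib
    using nonzero by (intro sum.cong refl) (auto simp: doob_transform_def field_simps)
  moreover have "(\<Sum>y\<in>UNIV - {x}. ?Q\<phi> t x y * (p t x * \<phi> t x / c)) = p t x * tilted / c"
    unfolding tilted_def sum_distrib_left sum_divide_distrib
    using nonzero by (intro sum.cong refl) (auto simp: doob_transform_def field_simps)
  ultimately show "((\<lambda>s. p s x * \<phi> s x / c) has_real_derivative
      (\<Sum>y\<in>UNIV - {x}. ?Q\<phi> t y x * (p t y * \<phi> t y / c)) - (\<Sum>y\<in>UNIV - {x}. ?Q\<phi> t x y * (p t x * \<phi> t x / c)))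
      (at t within {a..b})"
    by simp
qed

section \<open>Divergence of jump rates and Gibbs' variational principle\<close>

(* The Bregman divergence of q ln q, with the convention 0 ln 0 = 0 used by pen. *)
definition rate_div :: "real \<Rightarrow> real \<Rightarrow> real" where
  "rate_div q w = (if q = 0 then 0 else q * ln (q / w)) - q + w"

lemma pen_eq_sum_rate_div: "pen Q' Q t x = (\<Sum>y\<in>UNIV - {x}. rate_div (Q t x y) (Q' t x y))"
  unfolding pen_def rate_div_def by (intro sum.cong refl) simp

lemma rate_div_self [simp]: "rate_div w w = 0"
  by (simp add: rate_div_def)

lemma pen_self: "pen Q Q t x = 0"
  by (simp add: pen_eq_sum_rate_div)

lemma sqrt_diff_square_le_rate_div:
  assumes "0 \<le> q" and "0 \<le> w" and "w = 0 \<longrightarrow> q = 0"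
  shows "(sqrt q - sqrt w)\<^sup>2 \<le> rate_div q w"
proof (cases "q = 0")
  case True
  then show ?thesis
    using \<open>0 \<le> w\<close> by (simp add: rate_div_def)
next
  case False
  define s v where "s = sqrt q" and "v = sqrt w"
  have "0 < s" "0 < v" and q: "q = s\<^sup>2" and w: "w = v\<^sup>2"
    using assms False by (auto simp: s_def v_def)
  have "ln (v / s) \<le> v / s - 1"
    using \<open>0 < s\<close> \<open>0 < v\<close> by (intro ln_le_minus_one) simp
  then have "1 - v / s \<le> ln (s / v)"
    using \<open>0 < s\<close> \<open>0 < v\<close> by (simp add: ln_div)
  then have "2 * s\<^sup>2 * (1 - v / s) \<le> 2 * s\<^sup>2 * ln (s / v)"
    by (intro mult_left_mono) auto
  moreover have "2 * s\<^sup>2 * (1 - v / s) = 2 * s\<^sup>2 - 2 * s * v"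
    using \<open>0 < s\<close> by (simp add: field_simps power2_eq_square)
  moreover have "ln (s\<^sup>2 / v\<^sup>2) = 2 * ln (s / v)"
    using \<open>0 < s\<close> \<open>0 < v\<close> by (simp add: ln_div ln_realpow algebra_simps)
  ultimately show ?thesis
    using False \<open>0 < s\<close> \<open>0 < v\<close> unfolding q w by (simp add: rate_div_def power2_diff algebra_simps)
qed

lemma rate_div_nonneg:
  assumes "0 \<le> q" and "0 \<le> w" and "w = 0 \<longrightarrow> q = 0"
  shows "0 \<le> rate_div q w"
  using sqrt_diff_square_le_rate_div[OF assms] zero_le_power2 order_trans by blast

lemma rate_div_eq_0_imp_eq:
  assumes "0 \<le> q" and "0 \<le> w" and "w = 0 \<longrightarrow> q = 0" and "rate_div q w = 0"
  shows "q = w"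
proof -
  have "(sqrt q - sqrt w)\<^sup>2 = 0"
    using sqrt_diff_square_le_rate_div[OF assms(1-3)] assms(4) by (simp add: antisym)
  then show ?thesis
    using assms(1,2) by simp
qed

lemma rate_div_tilt:
  assumes "0 \<le> q" and "0 \<le> w" and "w = 0 \<longrightarrow> q = 0" and "0 < c"
  shows "rate_div q w - rate_div q (w * c) = q * ln c - w * (c - 1)"
proof (cases "q = 0")
  case False
  then have "0 < q" "0 < w"
    using assms by auto
  then have "ln (q / w) - ln (q / (w * c)) = ln c"
    using \<open>0 < c\<close> by (simp add: ln_div ln_mult)
  then show ?thesis
    using False by (simp add: rate_div_def algebra_simps flip: right_diff_distrib)
qed (simp add: rate_div_def algebra_simps)

lemma gibbs_identity:
  fixes P c f :: "'x::finite \<Rightarrow> real"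
  assumes P: "is_distr P" and c: "\<And>x. 0 \<le> c x" and f: "\<And>x. 0 < f x"
    and abs_cont: "\<And>x. c x = 0 \<Longrightarrow> P x = 0" and Z: "0 < (\<Sum>x\<in>UNIV. c x * f x)"
  shows "(\<Sum>x\<in>UNIV. P x * ln (f x)) - KL P c
    = ln (\<Sum>x\<in>UNIV. c x * f x) - (\<Sum>x\<in>UNIV. rate_div (P x) (c x * f x / (\<Sum>y\<in>UNIV. c y * f y)))"
proof -
  define Z where "Z = (\<Sum>x\<in>UNIV. c x * f x)"
  define \<pi> where "\<pi> x = c x * f x / Z" for x
  have summand: "P x * ln (f x) - (if P x = 0 then 0 else P x * ln (P x / c x))
      = P x * ln Z - rate_div (P x) (\<pi> x) + \<pi> x - P x" for x
  proof (cases "P x = 0")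
    case False
    then have "0 < P x" "0 < c x"
      using P abs_cont[of x] c[of x] by (auto simp: is_distr_def order.strict_iff_order)
    then have "ln (P x / \<pi> x) = ln (P x / c x) - ln (f x) + ln Z"
      using f[of x] Z by (simp add: \<pi>_def Z_def ln_div ln_mult)
    then have "P x * ln (P x / \<pi> x) = P x * (ln (P x / c x) - ln (f x) + ln Z)"
      by simp
    then show ?thesis
      using False by (simp add: rate_div_def algebra_simps)
  qed (simp add: rate_div_def)
  have "(\<Sum>x\<in>UNIV. P x * ln (f x)) - KL P c
      = (\<Sum>x\<in>UNIV. P x * ln Z - rate_div (P x) (\<pi> x) + \<pi> x - P x)"
    unfolding KL_def sum_subtractf[symmetric] summand ..
  also have "\<dots> = ln Z * (\<Sum>x\<in>UNIV. P x) - (\<Sum>x\<in>UNIV. rate_div (P x) (\<pi> x))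
      + (\<Sum>x\<in>UNIV. \<pi> x) - (\<Sum>x\<in>UNIV. P x)"
    by (simp add: sum.distrib sum_subtractf sum_distrib_left mult.commute)
  finally have "(\<Sum>x\<in>UNIV. P x * ln (f x)) - KL P c
      = ln Z * (\<Sum>x\<in>UNIV. P x) - (\<Sum>x\<in>UNIV. rate_div (P x) (\<pi> x))
      + (\<Sum>x\<in>UNIV. \<pi> x) - (\<Sum>x\<in>UNIV. P x)" .
  moreover have "(\<Sum>x\<in>UNIV. \<pi> x) = 1" and "(\<Sum>x\<in>UNIV. P x) = 1"
    using Z P by (simp_all add: \<pi>_def Z_def is_distr_def flip: sum_divide_distrib)
  ultimately show ?thesis
    by (simp add: Z_def \<pi>_def)
qed

lemma gibbs_le:
  fixes P c f :: "'x::finite \<Rightarrow> real"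
  assumes P: "is_distr P" and c: "\<And>x. 0 \<le> c x" and f: "\<And>x. 0 < f x"
    and abs_cont: "\<And>x. c x = 0 \<Longrightarrow> P x = 0" and Z: "0 < (\<Sum>x\<in>UNIV. c x * f x)"
  shows "(\<Sum>x\<in>UNIV. P x * ln (f x)) - KL P c \<le> ln (\<Sum>x\<in>UNIV. c x * f x)"
proof -
  have "0 \<le> rate_div (P x) (c x * f x / (\<Sum>y\<in>UNIV. c y * f y))" for x
    using P c[of x] f[of x] abs_cont[of x] Z by (intro rate_div_nonneg) (auto simp: is_distr_def)
  then show ?thesis
    using gibbs_identity[of P c f, OF assms] by (simp add: sum_nonneg)
qed

lemma gibbs_eq_iff:
  fixes P c f :: "'x::finite \<Rightarrow> real"
  assumes P: "is_distr P" and c: "\<And>x. 0 \<le> c x" and f: "\<And>x. 0 < f x"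
    and abs_cont: "\<And>x. c x = 0 \<Longrightarrow> P x = 0" and Z: "0 < (\<Sum>x\<in>UNIV. c x * f x)"
  shows "(\<Sum>x\<in>UNIV. P x * ln (f x)) - KL P c = ln (\<Sum>x\<in>UNIV. c x * f x)
     \<longleftrightarrow> P = (\<lambda>x. c x * f x / (\<Sum>y\<in>UNIV. c y * f y))"
proof -
  let ?\<pi> = "\<lambda>x. c x * f x / (\<Sum>y\<in>UNIV. c y * f y)"
  have nonneg: "0 \<le> rate_div (P x) (?\<pi> x)" for x
    using P c[of x] f[of x] abs_cont[of x] Z by (intro rate_div_nonneg) (auto simp: is_distr_def)
  have "(\<Sum>x\<in>UNIV. rate_div (P x) (?\<pi> x)) = 0 \<longleftrightarrow> P = ?\<pi>"
  proof
    assume "(\<Sum>x\<in>UNIV. rate_div (P x) (?\<pi> x)) = 0"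
    then have zero: "rate_div (P x) (?\<pi> x) = 0" for x
      using nonneg by (simp add: sum_nonneg_eq_0_iff)
    show "P = ?\<pi>"
    proof
      fix x
      have "0 \<le> P x"
        using P by (simp add: is_distr_def)
      moreover have "0 \<le> ?\<pi> x" and "?\<pi> x = 0 \<longrightarrow> P x = 0"
        using c[of x] f[of x] abs_cont[of x] Z by (auto simp: less_imp_le)
      ultimately show "P x = ?\<pi> x"
        using zero[of x] by (rule rate_div_eq_0_imp_eq)
    qed
  qed simp
  then show ?thesis
    using gibbs_identity[of P c f, OF assms] by simp
qed

section \<open>The verification identity\<close>

lemma pen_diff_doob_transform:
  fixes Q' Q :: "real \<Rightarrow> 'x::finite \<Rightarrow> 'x \<Rightarrow> real"
  assumes diag: "Q' t x x = - (\<Sum>y\<in>UNIV - {x}. Q' t x y)"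
    and Q'_nonneg: "\<And>y. y \<noteq> x \<Longrightarrow> 0 \<le> Q' t x y" and Q_nonneg: "\<And>y. y \<noteq> x \<Longrightarrow> 0 \<le> Q t x y"
    and abs_cont: "\<And>y. y \<noteq> x \<Longrightarrow> Q' t x y = 0 \<Longrightarrow> Q t x y = 0"
    and pos: "\<And>y. 0 < \<phi> t y"
  shows "pen Q' Q t x - pen (doob_transform Q' \<phi>) Q t x
    = (\<Sum>y\<in>UNIV - {x}. Q t x y * (ln (\<phi> t y) - ln (\<phi> t x))) - (\<Sum>y\<in>UNIV. Q' t x y * \<phi> t y) / \<phi> t x"
proof -
  have "rate_div (Q t x y) (Q' t x y) - rate_div (Q t x y) (doob_transform Q' \<phi> t x y)
      = Q t x y * (ln (\<phi> t y) - ln (\<phi> t x)) - Q' t x y * (\<phi> t y / \<phi> t x - 1)"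
    if "y \<in> UNIV - {x}" for y
    using rate_div_tilt[of "Q t x y" "Q' t x y" "\<phi> t y / \<phi> t x"] that
      Q_nonneg[of y] Q'_nonneg[of y] abs_cont[of y] pos[of x] pos[of y]
    by (simp add: doob_transform_def ln_div)
  then have "pen Q' Q t x - pen (doob_transform Q' \<phi>) Q t x
      = (\<Sum>y\<in>UNIV - {x}. Q t x y * (ln (\<phi> t y) - ln (\<phi> t x)))
        - (\<Sum>y\<in>UNIV - {x}. Q' t x y * (\<phi> t y / \<phi> t x - 1))"
    by (simp add: pen_eq_sum_rate_div flip: sum_subtractf)
  also have "(\<Sum>y\<in>UNIV - {x}. Q' t x y * (\<phi> t y / \<phi> t x - 1)) = (\<Sum>y\<in>UNIV. Q' t x y * \<phi> t y) / \<phi> t x"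
  proof -
    have "(\<Sum>y\<in>UNIV - {x}. Q' t x y * (\<phi> t y / \<phi> t x - 1))
        = (\<Sum>y\<in>UNIV - {x}. Q' t x y * \<phi> t y) / \<phi> t x - (\<Sum>y\<in>UNIV - {x}. Q' t x y)"
      by (simp add: right_diff_distrib sum_subtractf sum_divide_distrib)
    also have "\<dots> = (Q' t x x * \<phi> t x + (\<Sum>y\<in>UNIV - {x}. Q' t x y * \<phi> t y)) / \<phi> t x"
      using diag pos[of x] by (simp add: field_simps)
    also have "\<dots> = (\<Sum>y\<in>UNIV. Q' t x y * \<phi> t y) / \<phi> t x"
      by (subst sum.remove[of UNIV x]) auto
    finally show ?thesis .
  qed
  finally show ?thesis .
qed

lemma kolmogorov_log_derivative_identity:
  fixes Q' Q :: "real \<Rightarrow> 'x::finite \<Rightarrow> 'x \<Rightarrow> real"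
  assumes diag: "\<And>x. Q' t x x = - (\<Sum>y\<in>UNIV - {x}. Q' t x y)"
    and Q'_nonneg: "\<And>x y. x \<noteq> y \<Longrightarrow> 0 \<le> Q' t x y" and Q_nonneg: "\<And>x y. x \<noteq> y \<Longrightarrow> 0 \<le> Q t x y"
    and abs_cont: "\<And>x y. x \<noteq> y \<Longrightarrow> Q' t x y = 0 \<Longrightarrow> Q t x y = 0"
    and pos: "\<And>x. 0 < \<phi> t x"
  shows "(\<Sum>x\<in>UNIV. p x * (- (\<Sum>y\<in>UNIV. Q' t x y * \<phi> t y) / \<phi> t x)
            + ((\<Sum>y\<in>UNIV - {x}. Q t y x * p y) - (\<Sum>y\<in>UNIV - {x}. Q t x y * p x)) * ln (\<phi> t x))
    = (\<Sum>x\<in>UNIV. p x * (pen Q' Q t x - pen (doob_transform Q' \<phi>) Q t x))"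
proof -
  have "(\<Sum>x\<in>UNIV. ((\<Sum>y\<in>UNIV - {x}. Q t y x * p y) - (\<Sum>y\<in>UNIV - {x}. Q t x y * p x)) * ln (\<phi> t x))
      = (\<Sum>x\<in>UNIV. \<Sum>y\<in>UNIV - {x}. Q t y x * p y * ln (\<phi> t x))
        - (\<Sum>x\<in>UNIV. \<Sum>y\<in>UNIV - {x}. Q t x y * p x * ln (\<phi> t x))"
    by (simp add: left_diff_distrib sum_subtractf sum_distrib_right)
  also have "(\<Sum>x\<in>UNIV. \<Sum>y\<in>UNIV - {x}. Q t y x * p y * ln (\<phi> t x))
      = (\<Sum>x\<in>UNIV. \<Sum>y\<in>UNIV - {x}. Q t x y * p x * ln (\<phi> t y))"
    by (rule sum_off_diagonal_swap)
  finally have flux: "(\<Sum>x\<in>UNIV. ((\<Sum>y\<in>UNIV - {x}. Q t y x * p y) - (\<Sum>y\<in>UNIV - {x}. Q t x y * p x)) * ln (\<phi> t x))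
      = (\<Sum>x\<in>UNIV. p x * (\<Sum>y\<in>UNIV - {x}. Q t x y * (ln (\<phi> t y) - ln (\<phi> t x))))"
    by (simp add: sum_distrib_left right_diff_distrib sum_subtractf mult_ac)
  have gap: "pen Q' Q t x - pen (doob_transform Q' \<phi>) Q t x
      = (\<Sum>y\<in>UNIV - {x}. Q t x y * (ln (\<phi> t y) - ln (\<phi> t x))) - (\<Sum>y\<in>UNIV. Q' t x y * \<phi> t y) / \<phi> t x"
    for x
    using assms by (intro pen_diff_doob_transform) auto
  have "(\<Sum>x\<in>UNIV. p x * (pen Q' Q t x - pen (doob_transform Q' \<phi>) Q t x))
      = (\<Sum>x\<in>UNIV. p x * (- (\<Sum>y\<in>UNIV. Q' t x y * \<phi> t y) / \<phi> t x)
          + p x * (\<Sum>y\<in>UNIV - {x}. Q t x y * (ln (\<phi> t y) - ln (\<phi> t x))))"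
    unfolding gap by (intro sum.cong refl) (simp add: algebra_simps)
  moreover have "(\<Sum>x\<in>UNIV. p x * (- (\<Sum>y\<in>UNIV. Q' t x y * \<phi> t y) / \<phi> t x)
            + ((\<Sum>y\<in>UNIV - {x}. Q t y x * p y) - (\<Sum>y\<in>UNIV - {x}. Q t x y * p x)) * ln (\<phi> t x))
      = (\<Sum>x\<in>UNIV. p x * (- (\<Sum>y\<in>UNIV. Q' t x y * \<phi> t y) / \<phi> t x))
        + (\<Sum>x\<in>UNIV. p x * (\<Sum>y\<in>UNIV - {x}. Q t x y * (ln (\<phi> t y) - ln (\<phi> t x))))"
    by (simp only: sum.distrib flux)
  ultimately show ?thesis
    by (simp only: sum.distrib)
qed

lemma penalty_gap_has_integral:
  fixes Q' Q :: "real \<Rightarrow> 'x::finite \<Rightarrow> 'x \<Rightarrow> real"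
  assumes "0 \<le> T" and gen: "is_generator T Q'"
    and Q_nonneg: "\<And>t x y. t \<in> {0..T} \<Longrightarrow> x \<noteq> y \<Longrightarrow> 0 \<le> Q t x y"
    and abs_cont: "\<And>t x y. t \<in> {0..T} \<Longrightarrow> x \<noteq> y \<Longrightarrow> Q' t x y = 0 \<Longrightarrow> Q t x y = 0"
    and pos: "\<And>t x. t \<in> {0..T} \<Longrightarrow> 0 < \<phi> t x"
    and bwd: "kolmogorov_backward 0 T Q' \<phi>" and fwd: "kolmogorov_forward 0 T Q p"
  shows "((\<lambda>t. \<Sum>x\<in>UNIV. p t x * (pen Q' Q t x - pen (doob_transform Q' \<phi>) Q t x)) has_integral
           (\<Sum>x\<in>UNIV. p T x * ln (\<phi> T x)) - (\<Sum>x\<in>UNIV. p 0 x * ln (\<phi> 0 x))) {0..T}"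
proof (rule fundamental_theorem_of_calculus[OF \<open>0 \<le> T\<close>])
  fix t assume t: "t \<in> {0..T}"
  have "((\<lambda>s. \<Sum>x\<in>UNIV. p s x * ln (\<phi> s x)) has_real_derivative
      (\<Sum>x\<in>UNIV. p t x * (1 / \<phi> t x * - (\<Sum>y\<in>UNIV. Q' t x y * \<phi> t y))
        + ((\<Sum>y\<in>UNIV - {x}. Q t y x * p t y) - (\<Sum>y\<in>UNIV - {x}. Q t x y * p t x)) * ln (\<phi> t x)))
      (at t within {0..T})"
  proof (rule DERIV_sum)
    fix x
    have "((\<lambda>s. p s x) has_real_derivative
        (\<Sum>y\<in>UNIV - {x}. Q t y x * p t y) - (\<Sum>y\<in>UNIV - {x}. Q t x y * p t x)) (at t within {0..T})"
      using fwd t by (simp add: kolmogorov_forward_def)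
    moreover have "((\<lambda>s. \<phi> s x) has_real_derivative - (\<Sum>y\<in>UNIV. Q' t x y * \<phi> t y)) (at t within {0..T})"
      using bwd t by (simp add: kolmogorov_backward_def)
    then have "((\<lambda>s. ln (\<phi> s x)) has_real_derivative 1 / \<phi> t x * - (\<Sum>y\<in>UNIV. Q' t x y * \<phi> t y))
        (at t within {0..T})"
      using DERIV_ln_divide[OF pos[OF t, of x]] by (rule DERIV_chain2[rotated])
    ultimately show "((\<lambda>s. p s x * ln (\<phi> s x)) has_real_derivative
        p t x * (1 / \<phi> t x * - (\<Sum>y\<in>UNIV. Q' t x y * \<phi> t y))
        + ((\<Sum>y\<in>UNIV - {x}. Q t y x * p t y) - (\<Sum>y\<in>UNIV - {x}. Q t x y * p t x)) * ln (\<phi> t x))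
        (at t within {0..T})"
      by (rule DERIV_mult')
  qed
  also have "(\<Sum>x\<in>UNIV. p t x * (1 / \<phi> t x * - (\<Sum>y\<in>UNIV. Q' t x y * \<phi> t y))
        + ((\<Sum>y\<in>UNIV - {x}. Q t y x * p t y) - (\<Sum>y\<in>UNIV - {x}. Q t x y * p t x)) * ln (\<phi> t x))
      = (\<Sum>x\<in>UNIV. p t x * (pen Q' Q t x - pen (doob_transform Q' \<phi>) Q t x))"
    using kolmogorov_log_derivative_identity[of Q' t Q \<phi> "p t"] gen t Q_nonneg abs_cont pos
    by (simp add: is_generator_def)
  finally show "((\<lambda>s. \<Sum>x\<in>UNIV. p s x * ln (\<phi> s x)) has_vector_derivative
      (\<Sum>x\<in>UNIV. p t x * (pen Q' Q t x - pen (doob_transform Q' \<phi>) Q t x))) (at t within {0..T})"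
    by (simp add: has_real_derivative_iff_has_vector_derivative)
qed

section \<open>The tilted control problem\<close>

locale tilted_control =
  fixes T \<alpha> :: real and r :: "'x::finite \<Rightarrow> real" and Qpre :: "real \<Rightarrow> 'x \<Rightarrow> 'x \<Rightarrow> real"
    and plim :: "'x \<Rightarrow> real" and \<phi> :: "real \<Rightarrow> 'x \<Rightarrow> real"
  assumes T_pos: "0 < T" and \<alpha>_pos: "0 < \<alpha>"
    and generator_pre: "is_generator T Qpre" and plim: "is_distr plim"
    and \<phi>_pos: "\<And>t x. t \<in> {0..T} \<Longrightarrow> 0 < \<phi> t x"
    and \<phi>_final: "\<phi> T = (\<lambda>x. exp (r x / \<alpha>))"
    and \<phi>_backward: "kolmogorov_backward 0 T Qpre \<phi>"
begin

definition Z :: real where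
  "Z = (\<Sum>x\<in>UNIV. plim x * \<phi> 0 x)"

definition \<pi> :: "'x \<Rightarrow> real" where
  "\<pi> x = plim x * \<phi> 0 x / Z"

abbreviation Qtilt :: "real \<Rightarrow> 'x \<Rightarrow> 'x \<Rightarrow> real" where
  "Qtilt \<equiv> doob_transform Qpre \<phi>"

definition is_maximiser :: "(real \<Rightarrow> 'x \<Rightarrow> 'x \<Rightarrow> real) \<Rightarrow> ('x \<Rightarrow> real) \<Rightarrow> bool" where
  "is_maximiser Qs P0s \<longleftrightarrow> admissible T Qpre plim Qs P0s \<and>
     (\<forall>Q P0. admissible T Qpre plim Q P0 \<longrightarrow>
               objective T \<alpha> r Qpre plim Q P0 \<le> objective T \<alpha> r Qpre plim Qs P0s)"

lemma \<phi>_continuous: "continuous_on {0..T} (\<lambda>t. \<phi> t x)"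
  using \<phi>_backward unfolding kolmogorov_backward_def continuous_on_eq_continuous_within
  by (blast intro: DERIV_continuous)

lemma Z_pos: "0 < Z"
proof -
  obtain x where "plim x \<noteq> 0"
    using plim by (force simp: is_distr_def)
  then have "0 < plim x * \<phi> 0 x"
    using plim \<phi>_pos[of 0 x] T_pos by (simp add: is_distr_def order.strict_iff_order)
  moreover have "0 \<le> plim y * \<phi> 0 y" for y
    using plim \<phi>_pos[of 0 y] T_pos by (simp add: is_distr_def less_imp_le)
  ultimately show ?thesis
    unfolding Z_def by (intro sum_pos2[of UNIV x]) auto
qed

lemma is_distr_\<pi>: "is_distr \<pi>"
  using plim \<phi>_pos[of 0] T_pos Z_pos
  by (auto simp: is_distr_def \<pi>_def Z_def less_imp_le simp flip: sum_divide_distrib)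

lemma is_generator_Qtilt: "is_generator T Qtilt"
  using generator_pre \<phi>_pos \<phi>_continuous by (rule is_generator_doob_transform)

lemma marginal_solves:
  assumes "is_generator T Q"
  shows "marginal T Q P0 0 = P0" and "kolmogorov_forward 0 T Q (marginal T Q P0)"
  using flow_start_and_solves[of 0 T Q P0] T_pos assms
  by (auto simp: marginal_def is_generator_def)

lemma marginal_continuous:
  assumes "is_generator T Q"
  shows "continuous_on {0..T} (\<lambda>t. marginal T Q P0 t x)"
  using marginal_solves(2)[OF assms] unfolding kolmogorov_forward_def continuous_on_eq_continuous_within
  by (blast intro: DERIV_continuous)

lemma penalty_gap_marginal_has_integral:
  assumes "is_generator T Q"
    and abs_cont: "\<And>t x y. t \<in> {0..T} \<Longrightarrow> x \<noteq> y \<Longrightarrow> Qpre t x y = 0 \<Longrightarrow> Q t x y = 0"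
  shows "((\<lambda>t. \<Sum>x\<in>UNIV. marginal T Q P0 t x * (pen Qpre Q t x - pen Qtilt Q t x)) has_integral
           (\<Sum>x\<in>UNIV. marginal T Q P0 T x * r x) / \<alpha> - (\<Sum>x\<in>UNIV. P0 x * ln (\<phi> 0 x))) {0..T}"
proof -
  have "((\<lambda>t. \<Sum>x\<in>UNIV. marginal T Q P0 t x * (pen Qpre Q t x - pen Qtilt Q t x)) has_integral
      (\<Sum>x\<in>UNIV. marginal T Q P0 T x * ln (\<phi> T x)) - (\<Sum>x\<in>UNIV. marginal T Q P0 0 x * ln (\<phi> 0 x))) {0..T}"
    using assms T_pos generator_pre \<phi>_pos \<phi>_backward marginal_solves(2)[OF assms(1)]
    by (intro penalty_gap_has_integral) (auto simp: is_generator_def)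
  moreover have "(\<Sum>x\<in>UNIV. marginal T Q P0 T x * ln (\<phi> T x)) = (\<Sum>x\<in>UNIV. marginal T Q P0 T x * r x) / \<alpha>"
    using \<alpha>_pos by (simp add: \<phi>_final sum_divide_distrib)
  ultimately show ?thesis
    using marginal_solves(1)[OF assms(1)] by simp
qed

lemma marginal_nonneg:
  assumes "admissible T Qpre plim Q P0" and "t \<in> {0..T}"
  shows "0 \<le> marginal T Q P0 t x"
  using assms T_pos unfolding marginal_def
  by (intro flow_nonneg) (auto simp: admissible_def is_generator_def is_distr_def)

lemma pen_Qtilt_nonneg:
  assumes "admissible T Qpre plim Q P0" and t: "t \<in> {0..T}"
  shows "0 \<le> pen Qtilt Q t x"
  unfolding pen_eq_sum_rate_div
proof (intro sum_nonneg rate_div_nonneg)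
  fix y assume "y \<in> UNIV - {x}"
  then show "0 \<le> Q t x y" and "0 \<le> Qtilt t x y" and "Qtilt t x y = 0 \<longrightarrow> Q t x y = 0"
    using assms generator_pre \<phi>_pos[OF t, of x] \<phi>_pos[OF t, of y]
    by (auto simp: admissible_def is_generator_def doob_transform_def)
qed

lemma objective_decomposition:
  assumes adm: "admissible T Qpre plim Q P0"
  defines "I \<equiv> integral {0..T} (\<lambda>t. \<Sum>x\<in>UNIV. marginal T Q P0 t x * pen Qtilt Q t x)"
  shows "(\<lambda>t. \<Sum>x\<in>UNIV. marginal T Q P0 t x * pen Qtilt Q t x) integrable_on {0..T}"
    and "objective T \<alpha> r Qpre plim Q P0 = \<alpha> * ((\<Sum>x\<in>UNIV. P0 x * ln (\<phi> 0 x)) - KL P0 plim) - \<alpha> * I"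
proof -
  let ?m = "marginal T Q P0" and ?E = "\<Sum>x\<in>UNIV. marginal T Q P0 T x * r x"
  define J where "J = integral {0..T} (\<lambda>t. \<Sum>x\<in>UNIV. ?m t x * pen Qpre Q t x)"
  have "((\<lambda>t. \<Sum>x\<in>UNIV. ?m t x * pen Qpre Q t x) has_integral J) {0..T}"
    unfolding J_def using adm by (intro integrable_integral) (simp add: admissible_def)
  moreover have "((\<lambda>t. \<Sum>x\<in>UNIV. ?m t x * (pen Qpre Q t x - pen Qtilt Q t x)) has_integral
      ?E / \<alpha> - (\<Sum>x\<in>UNIV. P0 x * ln (\<phi> 0 x))) {0..T}"
    using adm by (intro penalty_gap_marginal_has_integral) (auto simp: admissible_def)
  ultimately have "((\<lambda>t. (\<Sum>x\<in>UNIV. ?m t x * pen Qpre Q t x)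
        - (\<Sum>x\<in>UNIV. ?m t x * (pen Qpre Q t x - pen Qtilt Q t x))) has_integral
      J - (?E / \<alpha> - (\<Sum>x\<in>UNIV. P0 x * ln (\<phi> 0 x)))) {0..T}"
    by (rule has_integral_diff)
  then have "((\<lambda>t. \<Sum>x\<in>UNIV. ?m t x * pen Qtilt Q t x) has_integral
      J - (?E / \<alpha> - (\<Sum>x\<in>UNIV. P0 x * ln (\<phi> 0 x)))) {0..T}"
    by (simp add: right_diff_distrib sum_subtractf)
  then show "(\<lambda>t. \<Sum>x\<in>UNIV. ?m t x * pen Qtilt Q t x) integrable_on {0..T}"
    and "objective T \<alpha> r Qpre plim Q P0 = \<alpha> * ((\<Sum>x\<in>UNIV. P0 x * ln (\<phi> 0 x)) - KL P0 plim) - \<alpha> * I"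
    using \<alpha>_pos by (auto simp: I_def objective_def J_def integral_unique field_simps)
qed

lemma admissible_tilted: "admissible T Qpre plim Qtilt \<pi>"
proof -
  have "((\<lambda>t. \<Sum>x\<in>UNIV. marginal T Qtilt \<pi> t x * (pen Qpre Qtilt t x - pen Qtilt Qtilt t x)) has_integral
      (\<Sum>x\<in>UNIV. marginal T Qtilt \<pi> T x * r x) / \<alpha> - (\<Sum>x\<in>UNIV. \<pi> x * ln (\<phi> 0 x))) {0..T}"
    using is_generator_Qtilt by (rule penalty_gap_marginal_has_integral) (simp add: doob_transform_def)
  then have "(\<lambda>t. \<Sum>x\<in>UNIV. marginal T Qtilt \<pi> t x * pen Qpre Qtilt t x) integrable_on {0..T}"
    by (simp add: pen_self has_integral_integrable)
  then show ?thesis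
    using is_generator_Qtilt is_distr_\<pi> by (auto simp: admissible_def \<pi>_def doob_transform_def)
qed

lemma objective_tilted: "objective T \<alpha> r Qpre plim Qtilt \<pi> = \<alpha> * ln Z"
proof -
  have "(\<Sum>x\<in>UNIV. \<pi> x * ln (\<phi> 0 x)) - KL \<pi> plim = ln Z"
    using gibbs_eq_iff[of \<pi> plim "\<phi> 0"] is_distr_\<pi> plim \<phi>_pos T_pos Z_pos
    by (auto simp: is_distr_def \<pi>_def Z_def fun_eq_iff)
  then show ?thesis
    using objective_decomposition(2)[OF admissible_tilted] by (simp add: pen_self)
qed

lemma maximiser_initial_eq_and_zero_penalty:
  assumes "is_maximiser Qs P0s"
  shows "P0s = \<pi>" and "integral {0..T} (\<lambda>t. \<Sum>x\<in>UNIV. marginal T Qs P0s t x * pen Qtilt Qs t x) = 0"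
proof -
  have adm: "admissible T Qpre plim Qs P0s"
    and opt: "\<And>Q P0. admissible T Qpre plim Q P0 \<Longrightarrow>
                objective T \<alpha> r Qpre plim Q P0 \<le> objective T \<alpha> r Qpre plim Qs P0s"
    using assms by (auto simp: is_maximiser_def)
  define I where "I = integral {0..T} (\<lambda>t. \<Sum>x\<in>UNIV. marginal T Qs P0s t x * pen Qtilt Qs t x)"
  define G where "G = (\<Sum>x\<in>UNIV. P0s x * ln (\<phi> 0 x)) - KL P0s plim"
  have "0 \<le> I"
    unfolding I_def using objective_decomposition(1)[OF adm]
    by (rule integral_nonneg) (intro sum_nonneg mult_nonneg_nonneg marginal_nonneg[OF adm] pen_Qtilt_nonneg[OF adm])
  have gibbs_assms: "is_distr P0s" "\<And>x. 0 \<le> plim x" "\<And>x. 0 < \<phi> 0 x" "\<And>x. plim x = 0 \<Longrightarrow> P0s x = 0"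
      "0 < (\<Sum>x\<in>UNIV. plim x * \<phi> 0 x)"
    using adm plim \<phi>_pos[of 0] T_pos Z_pos by (auto simp: admissible_def is_distr_def Z_def)
  have "G \<le> ln Z"
    unfolding G_def Z_def by (rule gibbs_le[OF gibbs_assms])
  moreover have "\<alpha> * ln Z \<le> \<alpha> * (G - I)"
    using opt[OF admissible_tilted] objective_decomposition(2)[OF adm]
    by (simp add: objective_tilted G_def I_def right_diff_distrib)
  then have "ln Z \<le> G - I"
    using \<alpha>_pos by simp
  ultimately have "I = 0" and "G = ln Z"
    using \<open>0 \<le> I\<close> by linarith+
  then show "integral {0..T} (\<lambda>t. \<Sum>x\<in>UNIV. marginal T Qs P0s t x * pen Qtilt Qs t x) = 0"
    and "P0s = \<pi>"
    using gibbs_eq_iff[OF gibbs_assms] by (auto simp: I_def G_def Z_def \<pi>_def[abs_def])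
qed

lemma rates_agree_on_support:
  assumes adm: "admissible T Qpre plim Q P0"
    and zero: "integral {0..T} (\<lambda>t. \<Sum>x\<in>UNIV. marginal T Q P0 t x * pen Qtilt Q t x) = 0"
    and t: "t \<in> {0..T}" and "x \<noteq> y"
  shows "marginal T Q P0 t x * Q t x y = marginal T Q P0 t x * Qtilt t x y"
proof -
  let ?m = "marginal T Q P0"
  \<comment> \<open>The penalty density vanishes only almost everywhere; this continuous minorant of it
    vanishes everywhere.\<close>
  define h where "h s = (\<Sum>x\<in>UNIV. ?m s x * (\<Sum>y\<in>UNIV - {x}. (sqrt (Q s x y) - sqrt (Qtilt s x y))\<^sup>2))" for s
  have "is_generator T Q"
    using adm by (simp add: admissible_def)
  have Qtilt_props: "0 \<le> Qtilt s x y" "Qtilt s x y = 0 \<longrightarrow> Q s x y = 0" if "s \<in> {0..T}" "x \<noteq> y" for s x y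
    using adm generator_pre \<phi>_pos[OF that(1), of x] \<phi>_pos[OF that(1), of y] that
    by (auto simp: admissible_def is_generator_def doob_transform_def)
  have h_nonneg: "0 \<le> h s" if "s \<in> {0..T}" for s
    unfolding h_def using marginal_nonneg[OF adm that] by (intro sum_nonneg mult_nonneg_nonneg) auto
  have "h t = 0"
  proof (rule continuous_vanishes_below_zero_integral[OF T_pos _ _ h_nonneg _ t])
    show "((\<lambda>s. \<Sum>x\<in>UNIV. ?m s x * pen Qtilt Q s x) has_integral 0) {0..T}"
      using objective_decomposition(1)[OF adm] zero by (metis integrable_integral)
    show "continuous_on {0..T} h"
      unfolding h_def using \<open>is_generator T Q\<close> is_generator_Qtilt
      by (intro continuous_intros marginal_continuous) (auto simp: is_generator_def)
    show "h s \<le> (\<Sum>x\<in>UNIV. ?m s x * pen Qtilt Q s x)" if "s \<in> {0..T}" for s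
      unfolding h_def pen_eq_sum_rate_div
      using adm that marginal_nonneg[OF adm that] Qtilt_props[OF that]
      by (intro sum_mono mult_left_mono sqrt_diff_square_le_rate_div) (auto simp: admissible_def is_generator_def)
  qed
  moreover have "0 \<le> ?m t x' * (\<Sum>y\<in>UNIV - {x'}. (sqrt (Q t x' y) - sqrt (Qtilt t x' y))\<^sup>2)" for x'
    using marginal_nonneg[OF adm t] by (intro mult_nonneg_nonneg sum_nonneg) auto
  ultimately have "?m t x * (\<Sum>y\<in>UNIV - {x}. (sqrt (Q t x y) - sqrt (Qtilt t x y))\<^sup>2) = 0"
    unfolding h_def by (simp add: sum_nonneg_eq_0_iff)
  then have "?m t x = 0 \<or> Q t x y = Qtilt t x y"
    using \<open>x \<noteq> y\<close> by (auto simp: sum_nonneg_eq_0_iff)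
  then show ?thesis
    by auto
qed

lemma tilted_pretrained_marginal_solves:
  "kolmogorov_forward 0 T Qtilt (\<lambda>t x. marginal T Qpre plim t x * \<phi> t x / Z)"
  using generator_pre \<phi>_pos marginal_solves(2)[OF generator_pre] \<phi>_backward
  by (intro kolmogorov_forward_doob_transform) (auto simp: is_generator_def)

lemma Z_eq_final: "Z = (\<Sum>x\<in>UNIV. exp (r x / \<alpha>) * marginal T Qpre plim T x)"
proof -
  have "(\<Sum>x\<in>UNIV. marginal T Qpre plim T x * \<phi> T x / Z) = (\<Sum>x\<in>UNIV. marginal T Qpre plim 0 x * \<phi> 0 x / Z)"
    using kolmogorov_forward_sum_const[OF tilted_pretrained_marginal_solves, of T] T_pos by simp
  then show ?thesis
    using Z_pos marginal_solves(1)[OF generator_pre]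
    by (simp add: \<phi>_final Z_def mult.commute flip: sum_divide_distrib)
qed

lemma marginal_eq_tilted_pretrained:
  assumes gen: "is_generator T Q"
    and support: "\<And>t x y. t \<in> {0..T} \<Longrightarrow> x \<noteq> y \<Longrightarrow>
                    marginal T Q \<pi> t x * Q t x y = marginal T Q \<pi> t x * Qtilt t x y"
    and t: "t \<in> {0..T}"
  shows "marginal T Q \<pi> t x = marginal T Qpre plim t x * \<phi> t x / Z"
proof -
  have Qtilt_cont: "continuous_on {0..T} (\<lambda>t. Qtilt t x y)" for x y
    using is_generator_Qtilt by (simp add: is_generator_def)
  have "kolmogorov_forward 0 T Qtilt (marginal T Q \<pi>)"
    using marginal_solves(2)[OF gen] support by (rule kolmogorov_forward_cong_on_support)
  then have "flow 0 T Qtilt \<pi> t = marginal T Q \<pi> t"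
    using marginal_solves(1)[OF gen] T_pos t by (intro flow_eqI[of 0 T Qtilt, OF _ Qtilt_cont]) auto
  moreover have "flow 0 T Qtilt \<pi> t = (\<lambda>x. marginal T Qpre plim t x * \<phi> t x / Z)"
    using tilted_pretrained_marginal_solves marginal_solves(1)[OF generator_pre] T_pos t
    by (intro flow_eqI[of 0 T Qtilt, OF _ Qtilt_cont]) (auto simp: \<pi>_def)
  ultimately show ?thesis
    by (metis)
qed

lemma tilt_penalty_vanishes_on_support:
  assumes support: "\<And>y. x \<noteq> y \<Longrightarrow> marginal T Q P0 t x * Q t x y = marginal T Q P0 t x * Qtilt t x y"
  shows "marginal T Q P0 t x * pen Qtilt Q t x = 0"
proof (cases "marginal T Q P0 t x = 0")
  case False
  then have "Q t x y = Qtilt t x y" if "y \<in> UNIV - {x}" for y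
    using support[of y] that by auto
  then show ?thesis
    by (simp add: pen_eq_sum_rate_div)
qed simp

lemma value_fn_eq_if_tilt_penalty_vanishes:
  assumes gen: "is_generator T Q"
    and abs_cont: "\<And>t x y. t \<in> {0..T} \<Longrightarrow> x \<noteq> y \<Longrightarrow> Qpre t x y = 0 \<Longrightarrow> Q t x y = 0"
    and vanish: "\<And>t z. t \<in> {0..T} \<Longrightarrow> trans T Q 0 x t z * pen Qtilt Q t z = 0"
  shows "value_fn T \<alpha> r Qpre Q 0 x = \<alpha> * ln (\<phi> 0 x)"
proof -
  let ?\<tau> = "trans T Q 0 x" and ?\<delta> = "\<lambda>z. if z = x then 1 else 0 :: real"
  have \<tau>: "?\<tau> = marginal T Q ?\<delta>"
    by (simp add: trans_def marginal_def)
  have "((\<lambda>t. \<Sum>z\<in>UNIV. marginal T Q ?\<delta> t z * (pen Qpre Q t z - pen Qtilt Q t z)) has_integral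
      (\<Sum>z\<in>UNIV. marginal T Q ?\<delta> T z * r z) / \<alpha> - (\<Sum>z\<in>UNIV. ?\<delta> z * ln (\<phi> 0 z))) {0..T}"
    by (rule penalty_gap_marginal_has_integral[OF gen abs_cont])
  moreover have "(\<Sum>z\<in>UNIV. ?\<delta> z * ln (\<phi> 0 z)) = ln (\<phi> 0 x)"
    by (subst sum.remove[of UNIV x]) auto
  ultimately have "((\<lambda>t. \<Sum>z\<in>UNIV. ?\<tau> t z * (pen Qpre Q t z - pen Qtilt Q t z)) has_integral
      (\<Sum>z\<in>UNIV. ?\<tau> T z * r z) / \<alpha> - ln (\<phi> 0 x)) {0..T}"
    unfolding \<tau> by simp
  then have "((\<lambda>t. \<Sum>z\<in>UNIV. ?\<tau> t z * pen Qpre Q t z) has_integral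
      (\<Sum>z\<in>UNIV. ?\<tau> T z * r z) / \<alpha> - ln (\<phi> 0 x)) {0..T}"
    by (rule has_integral_eq[rotated]) (simp add: right_diff_distrib sum_subtractf vanish)
  then show ?thesis
    using \<alpha>_pos by (simp add: value_fn_def integral_unique field_simps)
qed

lemma trans_tilt_penalty_vanishes:
  assumes adm: "admissible T Qpre plim Q P0" and "0 < P0 x"
    and vanish: "\<And>t z. t \<in> {0..T} \<Longrightarrow> marginal T Q P0 t z * pen Qtilt Q t z = 0"
    and t: "t \<in> {0..T}"
  shows "trans T Q 0 x t z * pen Qtilt Q t z = 0"
proof -
  have gen: "is_generator T Q" and P0: "is_distr P0"
    using adm by (auto simp: admissible_def)
  have trans_nonneg: "0 \<le> trans T Q 0 w t z" for w
    using gen T_pos t unfolding trans_def by (intro flow_nonneg) (auto simp: is_generator_def)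
  have "P0 x * trans T Q 0 x t z \<le> (\<Sum>w\<in>UNIV. P0 w * trans T Q 0 w t z)"
    using P0 trans_nonneg by (intro member_le_sum[where f = "\<lambda>w. P0 w * trans T Q 0 w t z"]) (auto simp: is_distr_def)
  also have "\<dots> = marginal T Q P0 t z"
    using gen T_pos t unfolding marginal_def trans_def
    by (intro flow_superposition[symmetric]) (auto simp: is_generator_def)
  finally have "P0 x * trans T Q 0 x t z * pen Qtilt Q t z \<le> marginal T Q P0 t z * pen Qtilt Q t z"
    using pen_Qtilt_nonneg[OF adm t, of z] by (rule mult_right_mono)
  then have "trans T Q 0 x t z * pen Qtilt Q t z \<le> 0"
    using vanish[OF t, of z] \<open>0 < P0 x\<close> by (simp add: mult.assoc mult_le_0_iff)
  moreover have "0 \<le> trans T Q 0 x t z * pen Qtilt Q t z"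
    using trans_nonneg pen_Qtilt_nonneg[OF adm t] by simp
  ultimately show ?thesis
    by simp
qed

lemma maximiser_value_fn:
  assumes max: "is_maximiser Qs P0s" and "plim x \<noteq> 0"
  shows "value_fn T \<alpha> r Qpre Qs 0 x = \<alpha> * ln (\<phi> 0 x)"
proof -
  have adm: "admissible T Qpre plim Qs P0s"
    using max by (simp add: is_maximiser_def)
  note maximiser = maximiser_initial_eq_and_zero_penalty[OF max]
  have "0 < P0s x"
    using \<open>plim x \<noteq> 0\<close> plim \<phi>_pos[of 0 x] T_pos Z_pos
    by (simp add: maximiser(1) \<pi>_def is_distr_def order.strict_iff_order)
  then show ?thesis
    using adm rates_agree_on_support[OF adm maximiser(2)]
    by (intro value_fn_eq_if_tilt_penalty_vanishes trans_tilt_penalty_vanishes[OF adm]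
        tilt_penalty_vanishes_on_support) (auto simp: admissible_def)
qed

lemma maximiser_final_marginal:
  assumes max: "is_maximiser Qs P0s"
  shows "marginal T Qs P0s T x = exp (r x / \<alpha>) * marginal T Qpre plim T x / Z"
proof -
  have adm: "admissible T Qpre plim Qs P0s"
    using max by (simp add: is_maximiser_def)
  note maximiser = maximiser_initial_eq_and_zero_penalty[OF max]
  have "is_generator T Qs"
    using adm by (simp add: admissible_def)
  then show ?thesis
    using marginal_eq_tilted_pretrained[of Qs T x] rates_agree_on_support[OF adm maximiser(2)] T_pos
    by (simp add: maximiser(1) \<phi>_final mult.commute)
qed

end

theorem mainTheorem4:
  fixes T \<alpha> :: real
    and r :: "'x::finite \<Rightarrow> real"
    and Qpre Qs :: "real \<Rightarrow> 'x \<Rightarrow> 'x \<Rightarrow> real"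
    and plim P0s :: "'x \<Rightarrow> real"
  assumes "T > 0" and "\<alpha> > 0"
    and "is_generator T Qpre"
    and "is_distr plim"
    and "admissible T Qpre plim Qs P0s"
    and "\<forall>Q P0. admissible T Qpre plim Q P0 \<longrightarrow>
               objective T \<alpha> r Qpre plim Q P0 \<le> objective T \<alpha> r Qpre plim Qs P0s"
  shows "(\<forall>x. P0s x = exp (value_fn T \<alpha> r Qpre Qs 0 x / \<alpha>) * plim x
                 / (\<Sum>y\<in>UNIV. exp (value_fn T \<alpha> r Qpre Qs 0 y / \<alpha>) * plim y))
       \<and> (\<forall>x. marginal T Qs P0s T x = exp (r x / \<alpha>) * marginal T Qpre plim T x
                 / (\<Sum>y\<in>UNIV. exp (r y / \<alpha>) * marginal T Qpre plim T y))"
proof -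
  obtain \<phi> where "\<phi> T = (\<lambda>x. exp (r x / \<alpha>))" and "\<And>t x. t \<in> {0..T} \<Longrightarrow> 0 < \<phi> t x"
    and "kolmogorov_backward 0 T Qpre \<phi>"
    using kolmogorov_backward_positive_solution[of T Qpre "\<lambda>x. exp (r x / \<alpha>)"] assms(1,3) by auto
  then interpret tilted_control T \<alpha> r Qpre plim \<phi>
    using assms(1-4) by unfold_locales auto
  have max: "is_maximiser Qs P0s"
    using assms(5,6) by (simp add: is_maximiser_def)
  have exp_value: "exp (value_fn T \<alpha> r Qpre Qs 0 x / \<alpha>) * plim x = plim x * \<phi> 0 x" for x
    using maximiser_value_fn[OF max, of x] \<alpha>_pos \<phi>_pos[of 0 x] T_pos by (cases "plim x = 0") auto
  then have "(\<Sum>y\<in>UNIV. exp (value_fn T \<alpha> r Qpre Qs 0 y / \<alpha>) * plim y) = Z"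
    by (simp only: Z_def)
  then have "P0s x = exp (value_fn T \<alpha> r Qpre Qs 0 x / \<alpha>) * plim x
      / (\<Sum>y\<in>UNIV. exp (value_fn T \<alpha> r Qpre Qs 0 y / \<alpha>) * plim y)" for x
    by (simp only: exp_value maximiser_initial_eq_and_zero_penalty(1)[OF max] \<pi>_def)
  moreover have "marginal T Qs P0s T x = exp (r x / \<alpha>) * marginal T Qpre plim T x
      / (\<Sum>y\<in>UNIV. exp (r y / \<alpha>) * marginal T Qpre plim T y)" for x
    using maximiser_final_marginal[OF max] by (simp only: Z_eq_final)
  ultimately show ?thesis
    by blast
qed

end
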